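(* Let $\mathfrak g$ be a simple Lie algebra, $a,b$ coprime with $0<a<b$, and $\lambda\in\Lambda^+$. If $m^0_{\lambda,a}\neq0$, then $0\in S_{\lambda,a}$ and $\mu=0$ is the unique minimizer of $f^*(\mu)=\frac{b}{2a}(\mu,\mu)+(\frac ba-1)(\mu,\rho)-\frac{ab}{2}(\lambda,\lambda)-(ab-1)(\lambda,\rho)$ on $S_{\lambda,a}$.
   Context: $\Lambda^+$ dominant weights, $W$ Weyl group, $\rho$ half the sum of positive roots, $(\cdot,\cdot)$ normalized invariant positive definite inner product, $\Pi_\lambda$ set of weights of $V_\lambda$, $S_{\lambda,a}=[\bigcup_{\sigma\in W}(\sigma(\rho)-\rho+a\Pi_\lambda)]\cap\Lambda^+$. The plethysm multiplicities $m^\mu_{\lambda,a}$ are defined by $\psi_a(\mathrm{ch}_\lambda)=\sum_{\mu\in\Lambda^+}m^\mu_{\lambda,a}\mathrm{ch}_\mu$, with $\mathrm{ch}_\lambda$ the formal character of $V_\lambda$ and $\psi_a(e_\nu)=e_{a\nu}$. *)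

theory Defs
  imports "HOL-Analysis.Analysis"
begin

text \<open>The weight space of a simple Lie algebra is modelled as a Euclidean space
  ''a with its inner product; the Lie algebra enters only through its root system R
  (a finite, reduced, crystallographic, irreducible root system spanning the space)
  together with a choice of positive roots P.\<close>

definition refl :: "'a::euclidean_space \<Rightarrow> 'a \<Rightarrow> 'a" where
  "refl \<alpha> x = x - (2 * (x \<bullet> \<alpha>) / (\<alpha> \<bullet> \<alpha>)) *\<^sub>R \<alpha>"

definition root_system :: "'a::euclidean_space set \<Rightarrow> bool" where
  "root_system R \<longleftrightarrow> finite R \<and> 0 \<notin> R \<and> span R = UNIV
     \<and> (\<forall>\<alpha>\<in>R. \<forall>\<beta>\<in>R. refl \<alpha> \<beta> \<in> R)
     \<and> (\<forall>\<alpha>\<in>R. \<forall>\<beta>\<in>R. 2 * (\<beta> \<bullet> \<alpha>) / (\<alpha> \<bullet> \<alpha>) \<in> \<int>)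
     \<and> (\<forall>\<alpha>\<in>R. \<forall>c::real. c *\<^sub>R \<alpha> \<in> R \<longrightarrow> c = 1 \<or> c = -1)"

definition irreducible_rs :: "'a::euclidean_space set \<Rightarrow> bool" where
  "irreducible_rs R \<longleftrightarrow> \<not> (\<exists>R1 R2. R1 \<noteq> {} \<and> R2 \<noteq> {} \<and> R1 \<union> R2 = R
        \<and> (\<forall>x\<in>R1. \<forall>y\<in>R2. x \<bullet> y = 0))"

text \<open>Normalized invariant form: long roots have squared length 2.\<close>
definition normalized_rs :: "'a::euclidean_space set \<Rightarrow> bool" where
  "normalized_rs R \<longleftrightarrow> (\<forall>\<alpha>\<in>R. \<alpha> \<bullet> \<alpha> \<le> 2) \<and> (\<exists>\<alpha>\<in>R. \<alpha> \<bullet> \<alpha> = 2)"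

definition positive_system :: "'a::euclidean_space set \<Rightarrow> 'a set \<Rightarrow> bool" where
  "positive_system R P \<longleftrightarrow> (\<exists>v. (\<forall>\<alpha>\<in>R. \<alpha> \<bullet> v \<noteq> 0) \<and> P = {\<alpha>\<in>R. \<alpha> \<bullet> v > 0})"

inductive_set weyl_group :: "'a::euclidean_space set \<Rightarrow> ('a \<Rightarrow> 'a) set" for R where
  id_in: "id \<in> weyl_group R"
| step: "w \<in> weyl_group R \<Longrightarrow> \<alpha> \<in> R \<Longrightarrow> refl \<alpha> \<circ> w \<in> weyl_group R"

text \<open>Sign of a Weyl group element: (-1)^(length), length = number of positive roots
  sent to negative roots.\<close>
definition wsign :: "'a::euclidean_space set \<Rightarrow> ('a \<Rightarrow> 'a) \<Rightarrow> int" where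
  "wsign P w = (-1) ^ card {\<alpha>\<in>P. w \<alpha> \<notin> P}"

definition rho :: "'a::euclidean_space set \<Rightarrow> 'a" where
  "rho P = (1/2) *\<^sub>R (\<Sum>\<alpha>\<in>P. \<alpha>)"

definition weight_lattice :: "'a::euclidean_space set \<Rightarrow> 'a set" where
  "weight_lattice R = {\<mu>. \<forall>\<alpha>\<in>R. 2 * (\<mu> \<bullet> \<alpha>) / (\<alpha> \<bullet> \<alpha>) \<in> \<int>}"

definition dominant :: "'a::euclidean_space set \<Rightarrow> 'a set \<Rightarrow> 'a set" where
  "dominant R P = {\<mu>\<in>weight_lattice R. \<forall>\<alpha>\<in>P. \<mu> \<bullet> \<alpha> \<ge> 0}"

text \<open>Formal characters: finitely supported integer functions on the weight space
  (element e_nu is the indicator of nu); multiplication is convolution.\<close>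
definition fsupp :: "('a \<Rightarrow> int) \<Rightarrow> 'a set" where
  "fsupp f = {x. f x \<noteq> 0}"

definition conv :: "('a::ab_group_add \<Rightarrow> int) \<Rightarrow> ('a \<Rightarrow> int) \<Rightarrow> 'a \<Rightarrow> int" where
  "conv f g \<nu> = (\<Sum>\<mu>\<in>fsupp f. f \<mu> * g (\<nu> - \<mu>))"

definition alternant :: "'a::euclidean_space set \<Rightarrow> 'a set \<Rightarrow> 'a \<Rightarrow> 'a \<Rightarrow> int" where
  "alternant R P \<mu> \<nu> = (\<Sum>w\<in>weyl_group R. if w \<mu> = \<nu> then wsign P w else 0)"

text \<open>Formal character ch_lambda of V_lambda, given by the Weyl character formula
  ch_lambda * A_rho = A_(lambda+rho).\<close>
definition ch :: "'a::euclidean_space set \<Rightarrow> 'a set \<Rightarrow> 'a \<Rightarrow> 'a \<Rightarrow> int" where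
  "ch R P lam = (THE f. finite (fsupp f)
      \<and> conv f (alternant R P (rho P)) = alternant R P (lam + rho P))"

definition weights :: "'a::euclidean_space set \<Rightarrow> 'a set \<Rightarrow> 'a \<Rightarrow> 'a set" where
  "weights R P lam = fsupp (ch R P lam)"

text \<open>Adams operation psi_a(e_nu) = e_(a nu), extended linearly.\<close>
definition adams :: "nat \<Rightarrow> ('a::real_vector \<Rightarrow> int) \<Rightarrow> 'a \<Rightarrow> int" where
  "adams a f \<nu> = f ((1 / real a) *\<^sub>R \<nu>)"

definition pleth_mult :: "'a::euclidean_space set \<Rightarrow> 'a set \<Rightarrow> 'a \<Rightarrow> nat \<Rightarrow> 'a \<Rightarrow> int" where
  "pleth_mult R P lam a = (THE m. finite (fsupp m) \<and> fsupp m \<subseteq> dominant R P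
      \<and> adams a (ch R P lam) = (\<lambda>\<nu>. \<Sum>\<mu>\<in>fsupp m. m \<mu> * ch R P \<mu> \<nu>))"

definition S_set :: "'a::euclidean_space set \<Rightarrow> 'a set \<Rightarrow> 'a \<Rightarrow> nat \<Rightarrow> 'a set" where
  "S_set R P lam a = (\<Union>\<sigma>\<in>weyl_group R.
      (\<lambda>\<pi>. \<sigma> (rho P) - rho P + real a *\<^sub>R \<pi>) ` weights R P lam) \<inter> dominant R P"

definition fstar :: "'a::euclidean_space set \<Rightarrow> nat \<Rightarrow> nat \<Rightarrow> 'a \<Rightarrow> 'a \<Rightarrow> real" where
  "fstar P a b lam \<mu> = real b / (2 * real a) * (\<mu> \<bullet> \<mu>)
      + (real b / real a - 1) * (\<mu> \<bullet> rho P)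
      - real a * real b / 2 * (lam \<bullet> lam)
      - (real a * real b - 1) * (lam \<bullet> rho P)"

end

theory Submission
  imports Defs "HOL-Library.Poly_Mapping"
begin

text \<open>The minimisation is elementary: elements of \<open>S\<^sub>\<lambda>\<^sub>,\<^sub>a\<close> are dominant, so for \<open>\<mu> \<noteq> 0\<close> both
  \<open>(\<mu>,\<mu>) > 0\<close> and \<open>(\<mu>,\<rho>) \<ge> 0\<close>, and both coefficients of \<open>f\<^sup>*\<close> are positive because \<open>a < b\<close>.

  The content is \<open>0 \<in> S\<^sub>\<lambda>\<^sub>,\<^sub>a\<close>. Multiplying \<open>\<psi>\<^sub>a(ch\<^sub>\<lambda>) = \<Sum> m\<^sup>\<mu> ch\<^sub>\<mu>\<close> by \<open>A\<^sub>\<rho>\<close> and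
  using the Weyl character formula \<open>ch\<^sub>\<mu> A\<^sub>\<rho> = A\<^sub>\<mu>\<^sub>+\<^sub>\<rho>\<close> shows that \<open>m\<^sup>\<mu>\<close> is the coefficient of
  \<open>e\<^sub>\<mu>\<^sub>+\<^sub>\<rho>\<close> in \<open>\<psi>\<^sub>a(ch\<^sub>\<lambda>) A\<^sub>\<rho>\<close>; so \<open>m\<^sup>0 \<noteq> 0\<close> forces \<open>\<rho> = a\<pi> + \<sigma>(\<rho>)\<close> for a weight \<open>\<pi>\<close> of
  \<open>V\<^sub>\<lambda>\<close> and some \<open>\<sigma> \<in> W\<close>. Since \<open>ch\<close> and \<open>m\<close> are defined implicitly, this needs the character
  formula with uniqueness: \<open>A\<^sub>\<rho>\<close> is not a zero divisor (look at the \<open>\<rho>\<close>-highest term), every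
  anti-invariant is a unique combination of alternants of strictly dominant weights, and
  \<open>A\<^sub>\<mu>\<^sub>+\<^sub>\<rho>\<close> is divisible by \<open>A\<^sub>\<rho> = e\<^sub>\<rho> \<Prod>\<^sub>\<alpha>\<^sub>>\<^sub>0 (1 - e\<^sub>-\<^sub>\<alpha>)\<close>, because the coefficients of an
  anti-invariant sum to zero along every \<open>\<alpha>\<close>-string.\<close>

lemma refl_linear: "linear (refl a)"
  unfolding refl_def
  by (rule linearI) (simp_all add: inner_add_left algebra_simps add_divide_distrib
      scaleR_add_left[symmetric] scaleR_diff_left[symmetric] divide_simps)

lemma refl_scaleR: "refl a (c *\<^sub>R x) = c *\<^sub>R refl a x"
  using refl_linear linear_scale by blast

lemma refl_diff: "refl a (x - y) = refl a x - refl a y"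
  using refl_linear linear_diff by blast

lemma refl_self: "a \<noteq> 0 \<Longrightarrow> refl a a = - a"
  unfolding refl_def by (simp add: scaleR_2)

lemma refl_inner: "a \<noteq> 0 \<Longrightarrow> refl a x \<bullet> refl a y = x \<bullet> y"
  unfolding refl_def
  by (simp add: inner_diff_left inner_diff_right algebra_simps inner_commute divide_simps)

lemma refl_refl:
  assumes "a \<noteq> 0" shows "refl a (refl a x) = x"
proof -
  have "refl a (refl a x) = refl a x - (2 * (x \<bullet> a) / (a \<bullet> a)) *\<^sub>R refl a a"
    by (simp add: refl_def[of a x] refl_diff refl_scaleR)
  also have "\<dots> = x" using assms by (simp add: refl_self) (simp add: refl_def)
  finally show ?thesis .
qed

lemma refl_minus_root: "refl (- a) = refl a"
  by (rule ext) (simp add: refl_def)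

lemma refl_conjugate:
  assumes "linear u" and "\<And>x y. u x \<bullet> u y = x \<bullet> y"
  shows "refl (u a) (u x) = u (refl a x)"
  by (simp add: refl_def assms linear_diff[OF assms(1)] linear_scale[OF assms(1)])

lemma refl_fixed_iff: "a \<noteq> 0 \<Longrightarrow> refl a x = x \<longleftrightarrow> x \<bullet> a = 0"
  by (simp add: refl_def)

definition nonneg_span :: "'a::real_vector set \<Rightarrow> 'a set" where
  "nonneg_span S = {x. \<exists>c. (\<forall>\<delta>\<in>S. c \<delta> \<ge> 0) \<and> x = (\<Sum>\<delta>\<in>S. c \<delta> *\<^sub>R \<delta>)}"

lemma nonneg_spanI: "(\<And>\<delta>. \<delta> \<in> S \<Longrightarrow> c \<delta> \<ge> 0) \<Longrightarrow> (\<Sum>\<delta>\<in>S. c \<delta> *\<^sub>R \<delta>) \<in> nonneg_span S"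
  unfolding nonneg_span_def by blast

lemma nonneg_spanE:
  assumes "x \<in> nonneg_span S"
  obtains c where "\<forall>\<delta>\<in>S. c \<delta> \<ge> 0" "x = (\<Sum>\<delta>\<in>S. c \<delta> *\<^sub>R \<delta>)"
  using assms unfolding nonneg_span_def by blast

lemma zero_in_nonneg_span: "0 \<in> nonneg_span S"
  using nonneg_spanI[of S "\<lambda>_. 0"] by simp

lemma nonneg_span_add:
  assumes "x \<in> nonneg_span S" "y \<in> nonneg_span S" shows "x + y \<in> nonneg_span S"
proof -
  obtain c where "\<forall>\<delta>\<in>S. c \<delta> \<ge> 0" "x = (\<Sum>\<delta>\<in>S. c \<delta> *\<^sub>R \<delta>)"
    using assms(1) by (rule nonneg_spanE)
  moreover obtain d where "\<forall>\<delta>\<in>S. d \<delta> \<ge> 0" "y = (\<Sum>\<delta>\<in>S. d \<delta> *\<^sub>R \<delta>)"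
    using assms(2) by (rule nonneg_spanE)
  ultimately show ?thesis
    using nonneg_spanI[of S "\<lambda>\<delta>. c \<delta> + d \<delta>"] by (simp add: sum.distrib scaleR_add_left)
qed

lemma nonneg_span_scaleR:
  assumes "t \<ge> 0" "x \<in> nonneg_span S" shows "t *\<^sub>R x \<in> nonneg_span S"
proof -
  obtain c where "\<forall>\<delta>\<in>S. c \<delta> \<ge> 0" "x = (\<Sum>\<delta>\<in>S. c \<delta> *\<^sub>R \<delta>)"
    using assms(2) by (rule nonneg_spanE)
  then show ?thesis
    using nonneg_spanI[of S "\<lambda>\<delta>. t * c \<delta>"] assms(1) by (simp add: scaleR_sum_right)
qed

lemma nonneg_span_mem:
  assumes "finite S" "\<delta> \<in> S" shows "\<delta> \<in> nonneg_span S"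
proof -
  have "(\<Sum>d\<in>S. (if d = \<delta> then 1 else 0) *\<^sub>R d) = (\<Sum>d\<in>S. if d = \<delta> then d else 0)"
    by (rule sum.cong) auto
  also have "\<dots> = \<delta>" using assms by simp
  finally
  show ?thesis using nonneg_spanI[of S "\<lambda>d. if d = \<delta> then 1 else 0"] by simp
qed

lemma nonneg_span_sum:
  "finite A \<Longrightarrow> (\<And>a. a \<in> A \<Longrightarrow> f a \<in> nonneg_span S) \<Longrightarrow> sum f A \<in> nonneg_span S"
  by (induction A rule: finite_induct) (auto intro: zero_in_nonneg_span nonneg_span_add)

lemma nonneg_span_subset:
  assumes "finite S" "S \<subseteq> nonneg_span T" shows "nonneg_span S \<subseteq> nonneg_span T"
proof
  fix x assume "x \<in> nonneg_span S"
  then obtain c where "\<forall>\<delta>\<in>S. c \<delta> \<ge> 0" "x = (\<Sum>\<delta>\<in>S. c \<delta> *\<^sub>R \<delta>)"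
    by (rule nonneg_spanE)
  then show "x \<in> nonneg_span T"
    using assms by (auto intro: nonneg_span_sum nonneg_span_scaleR)
qed

lemma nonneg_span_inner_nonneg:
  assumes "\<And>\<delta>. \<delta> \<in> S \<Longrightarrow> \<delta> \<bullet> v \<ge> 0" "x \<in> nonneg_span S" shows "x \<bullet> v \<ge> 0"
proof -
  obtain c where "\<forall>\<delta>\<in>S. c \<delta> \<ge> 0" "x = (\<Sum>\<delta>\<in>S. c \<delta> *\<^sub>R \<delta>)"
    using assms(2) by (rule nonneg_spanE)
  then show ?thesis using assms(1) by (simp add: inner_sum_left sum_nonneg)
qed

lemma nonneg_combination_inner_zero:
  assumes "finite S" "\<forall>\<delta>\<in>S. \<delta> \<bullet> v > 0" "\<forall>\<delta>\<in>S. c \<delta> \<ge> 0"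
    and "(\<Sum>\<delta>\<in>S. c \<delta> *\<^sub>R \<delta>) \<bullet> v = 0"
  shows "\<forall>\<delta>\<in>S. c \<delta> = 0"
proof -
  have "(\<Sum>\<delta>\<in>S. c \<delta> * (\<delta> \<bullet> v)) = 0" using assms(4) by (simp add: inner_sum_left)
  moreover have "c \<delta> * (\<delta> \<bullet> v) \<ge> 0" if "\<delta> \<in> S" for \<delta>
    using mult_nonneg_nonneg[of "c \<delta>" "\<delta> \<bullet> v"] assms(2,3) that by (simp add: less_imp_le)
  ultimately have "\<forall>\<delta>\<in>S. c \<delta> * (\<delta> \<bullet> v) = 0"
    using sum_nonneg_eq_0_iff[OF assms(1), of "\<lambda>\<delta>. c \<delta> * (\<delta> \<bullet> v)"] by blast
  then show ?thesis using assms(2) by (metis less_irrefl mult_eq_0_iff)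
qed

lemma nonneg_span_inner_eq_zero:
  assumes "finite S" "\<forall>\<delta>\<in>S. \<delta> \<bullet> v > 0" "x \<in> nonneg_span S" "x \<bullet> v = 0"
  shows "x = 0"
proof -
  obtain c where c: "\<forall>\<delta>\<in>S. c \<delta> \<ge> 0" "x = (\<Sum>\<delta>\<in>S. c \<delta> *\<^sub>R \<delta>)"
    using assms(3) by (rule nonneg_spanE)
  then have "\<forall>\<delta>\<in>S. c \<delta> = 0" using nonneg_combination_inner_zero[OF assms(1,2)] assms(4) by blast
  then show ?thesis using c(2) by simp
qed

section \<open>Root systems with a choice of positive roots\<close>

locale positive_root_system =
  fixes R P :: "'a::euclidean_space set" and v :: 'a
  assumes root_system: "root_system R"
    and regular: "\<And>\<alpha>. \<alpha> \<in> R \<Longrightarrow> \<alpha> \<bullet> v \<noteq> 0"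
    and P_eq: "P = {\<alpha>\<in>R. \<alpha> \<bullet> v > 0}"
begin

abbreviation W where "W \<equiv> weyl_group R"

lemma finite_R: "finite R"
  and root_nonzero: "\<alpha> \<in> R \<Longrightarrow> \<alpha> \<noteq> 0"
  and span_R: "span R = UNIV"
  and refl_root: "\<alpha> \<in> R \<Longrightarrow> \<beta> \<in> R \<Longrightarrow> refl \<alpha> \<beta> \<in> R"
  and cartan_integer: "\<alpha> \<in> R \<Longrightarrow> \<beta> \<in> R \<Longrightarrow> 2 * (\<beta> \<bullet> \<alpha>) / (\<alpha> \<bullet> \<alpha>) \<in> \<int>"
  and root_multiple: "\<alpha> \<in> R \<Longrightarrow> c *\<^sub>R \<alpha> \<in> R \<Longrightarrow> c = 1 \<or> c = -1"
  using root_system unfolding root_system_def by auto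

lemma minus_root: "\<alpha> \<in> R \<Longrightarrow> - \<alpha> \<in> R"
  using refl_root[of \<alpha> \<alpha>] refl_self[OF root_nonzero] by simp

lemma positive_root: "\<alpha> \<in> P \<Longrightarrow> \<alpha> \<in> R"
  and finite_P: "finite P"
  and positive_inner_v: "\<alpha> \<in> P \<Longrightarrow> \<alpha> \<bullet> v > 0"
  using P_eq finite_R by auto

lemma minus_not_positive: "\<alpha> \<in> P \<Longrightarrow> - \<alpha> \<notin> P"
  using P_eq by auto

lemma positive_or_minus: "\<alpha> \<in> R \<Longrightarrow> \<alpha> \<notin> P \<Longrightarrow> - \<alpha> \<in> P"
  using P_eq regular minus_root by force

lemma positive_nonzero: "\<alpha> \<in> P \<Longrightarrow> \<alpha> \<noteq> 0"
  using positive_root root_nonzero by auto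

lemma positive_inner_self: "\<alpha> \<in> P \<Longrightarrow> \<alpha> \<bullet> \<alpha> > 0"
  using positive_nonzero by auto

lemma refl_refl_comp: "\<alpha> \<in> R \<Longrightarrow> refl \<alpha> \<circ> refl \<alpha> = id"
  using refl_refl root_nonzero by (auto simp: fun_eq_iff)

lemma weyl_refl: "\<alpha> \<in> R \<Longrightarrow> refl \<alpha> \<in> W"
  using weyl_group.step[OF weyl_group.id_in] by (metis comp_id)

lemma weyl_comp: "w \<in> W \<Longrightarrow> u \<in> W \<Longrightarrow> w \<circ> u \<in> W"
  by (induction rule: weyl_group.induct) (auto simp: comp_assoc intro: weyl_group.step)

lemma weyl_linear: "w \<in> W \<Longrightarrow> linear w"
proof (induction rule: weyl_group.induct)
  case id_in show ?case unfolding id_def by (rule linear_ident)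
next
  case (step w \<alpha>) show ?case by (rule linear_compose[OF step.IH refl_linear])
qed

lemma weyl_inner: "w \<in> W \<Longrightarrow> w x \<bullet> w y = x \<bullet> y"
  by (induction arbitrary: x y rule: weyl_group.induct) (auto simp: refl_inner root_nonzero)

lemma weyl_root: "w \<in> W \<Longrightarrow> \<alpha> \<in> R \<Longrightarrow> w \<alpha> \<in> R"
  by (induction arbitrary: \<alpha> rule: weyl_group.induct) (auto simp: refl_root)

lemma weyl_diff: "w \<in> W \<Longrightarrow> w (x - y) = w x - w y"
  and weyl_minus: "w \<in> W \<Longrightarrow> w (- x) = - w x"
  and weyl_scaleR: "w \<in> W \<Longrightarrow> w (c *\<^sub>R x) = c *\<^sub>R w x"
  and weyl_zero: "w \<in> W \<Longrightarrow> w 0 = 0"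
  and weyl_sum: "w \<in> W \<Longrightarrow> w (sum f A) = (\<Sum>x\<in>A. w (f x))"
  using weyl_linear linear_diff linear_neg linear_scale linear_0 linear_sum by blast+

lemma weyl_inj: "w \<in> W \<Longrightarrow> inj w"
proof (rule injI)
  fix x y assume w: "w \<in> W" and "w x = w y"
  then have "w (x - y) \<bullet> w (x - y) = 0" by (simp add: weyl_diff)
  then show "x = y" using weyl_inner[OF w, of "x - y" "x - y"] by simp
qed

lemma weyl_inverse_exists: "w \<in> W \<Longrightarrow> \<exists>u\<in>W. u \<circ> w = id \<and> w \<circ> u = id"
proof (induction rule: weyl_group.induct)
  case id_in
  have "id \<circ> id = (id :: 'a \<Rightarrow> 'a)" by simp
  then show ?case using weyl_group.id_in by blast
next
  case (step w \<alpha>)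
  then obtain u where u: "u \<in> W" "u \<circ> w = id" "w \<circ> u = id" by blast
  have "u \<circ> refl \<alpha> \<in> W" using weyl_comp[OF u(1) weyl_refl[OF step(2)]] .
  moreover have "(u \<circ> refl \<alpha>) \<circ> (refl \<alpha> \<circ> w) = id" "(refl \<alpha> \<circ> w) \<circ> (u \<circ> refl \<alpha>) = id"
    using refl_refl_comp[OF step(2)] u by (metis comp_assoc comp_id)+
  ultimately show ?case by blast
qed

lemma weyl_inv: "w \<in> W \<Longrightarrow> inv w \<in> W \<and> inv w \<circ> w = id \<and> w \<circ> inv w = id"
  using weyl_inverse_exists by (metis inv_unique_comp)

lemma weyl_inv_in: "w \<in> W \<Longrightarrow> inv w \<in> W"
  using weyl_inv by blast

lemma weyl_inv_left [simp]: "w \<in> W \<Longrightarrow> inv w (w x) = x"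
  and weyl_inv_right [simp]: "w \<in> W \<Longrightarrow> w (inv w x) = x"
  using weyl_inv by (metis comp_apply id_apply)+

lemma weyl_bij:
  assumes "w \<in> W" shows "bij w"
proof (rule bijI)
  show "inj w" using weyl_inj[OF assms] .
  show "surj w" using assms by (metis surjI weyl_inv_right)
qed

lemma finite_weyl_group: "finite W"
proof -
  have "inj_on (\<lambda>w. restrict w R) W"
  proof (rule inj_onI)
    fix w u assume w: "w \<in> W" and u: "u \<in> W" and eq: "restrict w R = restrict u R"
    have "w x = u x" for x
    proof (rule linear_eq_on_span[OF weyl_linear[OF w] weyl_linear[OF u]])
      show "x \<in> span R" using span_R by simp
      fix b assume "b \<in> R" then show "w b = u b" using eq by (metis restrict_apply')
    qed
    then show "w = u" by auto
  qed
  moreover have "(\<lambda>w. restrict w R) ` W \<subseteq> (\<Pi>\<^sub>E i\<in>R. R)"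
    using weyl_root by auto
  moreover have "finite (\<Pi>\<^sub>E i\<in>R. R)" using finite_R by (simp add: finite_PiE)
  ultimately show ?thesis by (meson finite_imageD finite_subset)
qed

lemma weyl_refl_conjugate: "w \<in> W \<Longrightarrow> refl (w \<alpha>) \<circ> w = w \<circ> refl \<alpha>"
  by (auto simp: fun_eq_iff refl_conjugate weyl_linear weyl_inner)

definition pos_root :: "'a \<Rightarrow> 'a" where "pos_root a = (if a \<in> P then a else - a)"

lemma pos_root_positive: "a \<in> R \<Longrightarrow> pos_root a \<in> P"
  using positive_or_minus by (auto simp: pos_root_def)

lemma bij_betw_pos_root_weyl:
  assumes w: "w \<in> W" shows "bij_betw (\<lambda>\<alpha>. pos_root (w \<alpha>)) P P"
proof -
  have "inj_on (\<lambda>\<alpha>. pos_root (w \<alpha>)) P"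
  proof (rule inj_onI)
    fix a b assume a: "a \<in> P" and b: "b \<in> P" and "pos_root (w a) = pos_root (w b)"
    then have "w a = w b \<or> w a = - w b"
      unfolding pos_root_def by (auto split: if_splits) (metis minus_minus)
    then have "w a = w b \<or> w a = w (- b)" using weyl_minus[OF w] by simp
    then have "a = b \<or> a = - b" using weyl_inj[OF w] by (metis injD)
    then show "a = b" using a b minus_not_positive by auto
  qed
  moreover have "(\<lambda>\<alpha>. pos_root (w \<alpha>)) ` P \<subseteq> P"
    using pos_root_positive weyl_root[OF w] positive_root by auto
  ultimately show ?thesis using endo_inj_surj[OF finite_P] by (simp add: bij_betw_def)
qed

section \<open>Simple roots\<close>

text \<open>The simple roots are taken to be a smallest subset of \<open>P\<close> of which every positive root is a
  nonnegative combination.\<close>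

definition generates_positive :: "'a set \<Rightarrow> bool" where
  "generates_positive D \<longleftrightarrow> D \<subseteq> P \<and> P \<subseteq> nonneg_span D"

definition simple :: "'a set" where "simple = arg_min card generates_positive"

lemma generates_positive_P: "generates_positive P"
  unfolding generates_positive_def using nonneg_span_mem[OF finite_P] by auto

lemma simple_generates: "generates_positive simple"
  and simple_card_min: "generates_positive D \<Longrightarrow> card simple \<le> card D"
  using arg_min_nat_lemma[of generates_positive P card, OF generates_positive_P] unfolding simple_def by auto

lemma simple_positive: "\<alpha> \<in> simple \<Longrightarrow> \<alpha> \<in> P"
  and positive_in_span_simple: "\<alpha> \<in> P \<Longrightarrow> \<alpha> \<in> nonneg_span simple"
  using simple_generates unfolding generates_positive_def by auto

lemma finite_simple: "finite simple"
  by (rule finite_subset[OF _ finite_P]) (use simple_positive in blast)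

lemma simple_root: "\<alpha> \<in> simple \<Longrightarrow> \<alpha> \<in> R"
  using simple_positive positive_root by blast

lemma simple_span_inner_v:
  assumes "S \<subseteq> simple" "x \<in> nonneg_span S" shows "x \<bullet> v \<ge> 0"
  using nonneg_span_inner_nonneg[OF _ assms(2)] assms(1)
  by (meson less_imp_le positive_inner_v simple_positive subsetD)

lemma simple_span_split:
  assumes "\<beta> \<in> simple" "x \<in> nonneg_span simple"
  obtains c y where "c \<ge> 0" "y \<in> nonneg_span (simple - {\<beta>})" "x = c *\<^sub>R \<beta> + y"
proof -
  obtain c where c: "\<forall>\<delta>\<in>simple. c \<delta> \<ge> 0" "x = (\<Sum>\<delta>\<in>simple. c \<delta> *\<^sub>R \<delta>)"
    using assms(2) by (rule nonneg_spanE)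
  have "x = c \<beta> *\<^sub>R \<beta> + (\<Sum>\<delta>\<in>simple - {\<beta>}. c \<delta> *\<^sub>R \<delta>)"
    using c(2) sum.remove[OF finite_simple assms(1)] by simp
  moreover have "(\<Sum>\<delta>\<in>simple - {\<beta>}. c \<delta> *\<^sub>R \<delta>) \<in> nonneg_span (simple - {\<beta>})"
    using c(1) by (intro nonneg_spanI) auto
  ultimately show ?thesis using that c(1) assms(1) by blast
qed

lemma simple_not_redundant:
  assumes "\<beta> \<in> simple" shows "\<beta> \<notin> nonneg_span (simple - {\<beta>})"
proof
  assume \<beta>: "\<beta> \<in> nonneg_span (simple - {\<beta>})"
  have "simple \<subseteq> nonneg_span (simple - {\<beta>})"
    using \<beta> finite_simple by (auto intro: nonneg_span_mem)
  then have "nonneg_span simple \<subseteq> nonneg_span (simple - {\<beta>})"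
    using nonneg_span_subset finite_simple by blast
  then have "generates_positive (simple - {\<beta>})"
    using simple_generates unfolding generates_positive_def by auto
  then have "card simple \<le> card (simple - {\<beta>})" by (rule simple_card_min)
  moreover have "card (simple - {\<beta>}) < card simple"
    using finite_simple assms by (rule card_Diff1_less)
  ultimately show False by simp
qed

lemma simple_not_multiple:
  assumes "\<beta> \<in> simple" "y \<in> nonneg_span (simple - {\<beta>})" "y \<bullet> v > 0"
  shows "t *\<^sub>R \<beta> \<noteq> y"
proof
  assume t: "t *\<^sub>R \<beta> = y"
  show False
  proof (cases "t \<le> 0")
    case True
    then have "y \<bullet> v \<le> 0"
      using t positive_inner_v[OF simple_positive[OF assms(1)]]
      by (auto simp: mult_nonpos_nonneg)
    then show False using assms(3) by simp
  next
    case False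
    then have "\<beta> = (1 / t) *\<^sub>R y" using t by auto
    also have "\<dots> \<in> nonneg_span (simple - {\<beta>})"
      using False assms(2) by (intro nonneg_span_scaleR) auto
    finally show False using simple_not_redundant assms(1) by blast
  qed
qed

lemma simple_refl_positive:
  assumes \<alpha>: "\<alpha> \<in> simple" and \<beta>: "\<beta> \<in> P" and ne: "\<beta> \<noteq> \<alpha>"
  shows "refl \<alpha> \<beta> \<in> P"
proof (rule ccontr)
  \<comment> \<open>Write \<open>\<beta> = c\<alpha> + y\<close> and \<open>-refl \<alpha> \<beta> = c'\<alpha> + y'\<close> with \<open>y, y'\<close> combinations of the other simple roots;
    adding gives a multiple of \<open>\<alpha>\<close> equal to \<open>y + y'\<close>, where \<open>y \<noteq> 0\<close> as \<open>R\<close> is reduced.\<close>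
  assume "refl \<alpha> \<beta> \<notin> P"
  then have "- refl \<alpha> \<beta> \<in> P"
    using positive_or_minus refl_root simple_root[OF \<alpha>] positive_root[OF \<beta>] by blast
  define k where "k = 2 * (\<beta> \<bullet> \<alpha>) / (\<alpha> \<bullet> \<alpha>)"
  have "k *\<^sub>R \<alpha> - \<beta> \<in> nonneg_span simple"
    using positive_in_span_simple[OF \<open>- refl \<alpha> \<beta> \<in> P\<close>] by (simp add: refl_def k_def)
  then obtain c' y' where y': "y' \<in> nonneg_span (simple - {\<alpha>})" "k *\<^sub>R \<alpha> - \<beta> = c' *\<^sub>R \<alpha> + y'"
    using simple_span_split[OF \<alpha>] by blast
  obtain c y where y: "y \<in> nonneg_span (simple - {\<alpha>})" "\<beta> = c *\<^sub>R \<alpha> + y"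
    using simple_span_split[OF \<alpha> positive_in_span_simple[OF \<beta>]] by blast
  have "y \<noteq> 0"
  proof
    assume "y = 0"
    then have "c = 1 \<or> c = -1"
      using root_multiple[OF simple_root[OF \<alpha>]] positive_root[OF \<beta>] y(2) by simp
    then show False
      using y(2) \<open>y = 0\<close> ne \<beta> minus_not_positive[OF simple_positive[OF \<alpha>]] by auto
  qed
  have pos: "\<forall>\<delta>\<in>simple - {\<alpha>}. \<delta> \<bullet> v > 0" using simple_positive positive_inner_v by blast
  have "y \<bullet> v > 0"
    using simple_span_inner_v[OF _ y(1)] nonneg_span_inner_eq_zero[OF _ pos y(1)] \<open>y \<noteq> 0\<close>
      finite_simple by fastforce
  moreover have "y' \<bullet> v \<ge> 0" using simple_span_inner_v[OF _ y'(1)] by blast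
  moreover have "(k - c - c') *\<^sub>R \<alpha> = y + y'" using y(2) y'(2) by (simp add: algebra_simps)
  moreover have "y + y' \<in> nonneg_span (simple - {\<alpha>})" using y(1) y'(1) by (rule nonneg_span_add)
  ultimately show False
    using simple_not_multiple[OF \<alpha>] by (metis add_pos_nonneg inner_add_left)
qed

lemma simple_refl_inversions:
  assumes "\<alpha> \<in> simple" shows "{\<beta>\<in>P. refl \<alpha> \<beta> \<notin> P} = {\<alpha>}"
proof -
  have "refl \<alpha> \<alpha> = - \<alpha>" using refl_self positive_nonzero simple_positive assms by blast
  then show ?thesis
    using simple_refl_positive[OF assms] simple_positive[OF assms] minus_not_positive by auto
qed

definition refl_prod :: "'a list \<Rightarrow> 'a \<Rightarrow> 'a" where
  "refl_prod ws = foldr (\<lambda>a f. refl a \<circ> f) ws id"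

lemma refl_prod_Nil [simp]: "refl_prod [] = id"
  and refl_prod_Cons [simp]: "refl_prod (a # ws) = refl a \<circ> refl_prod ws"
  by (simp_all add: refl_prod_def)

lemma refl_prod_append: "refl_prod (xs @ ys) = refl_prod xs \<circ> refl_prod ys"
  by (induction xs) (simp_all add: comp_assoc)

lemma refl_prod_weyl: "set ws \<subseteq> R \<Longrightarrow> refl_prod ws \<in> W"
  by (induction ws) (auto intro: weyl_group.intros)

lemma refl_prod_rev:
  "set ws \<subseteq> R \<Longrightarrow> refl_prod (rev ws) \<circ> refl_prod ws = id \<and> refl_prod ws \<circ> refl_prod (rev ws) = id"
proof (induction ws)
  case (Cons a ws)
  then have "set ws \<subseteq> R" "a \<in> R" by auto
  note IH = Cons.IH[OF this(1)] and aa = refl_refl_comp[OF this(2)]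
  have "refl_prod (rev (a # ws)) \<circ> refl_prod (a # ws) = refl_prod (rev ws) \<circ> (refl a \<circ> refl a) \<circ> refl_prod ws"
    by (simp add: refl_prod_append comp_assoc)
  moreover have "refl_prod (a # ws) \<circ> refl_prod (rev (a # ws)) = refl a \<circ> (refl_prod ws \<circ> refl_prod (rev ws)) \<circ> refl a"
    by (simp add: refl_prod_append comp_assoc)
  ultimately show ?case using IH aa by (simp only: comp_id)
qed simp

lemma exists_simple_inner_pos:
  assumes "\<beta> \<in> P" shows "\<exists>\<alpha>\<in>simple. \<alpha> \<bullet> \<beta> > 0"
proof (rule ccontr)
  assume none: "\<not> (\<exists>\<alpha>\<in>simple. \<alpha> \<bullet> \<beta> > 0)"
  obtain c where c: "\<forall>\<delta>\<in>simple. c \<delta> \<ge> 0" "\<beta> = (\<Sum>\<delta>\<in>simple. c \<delta> *\<^sub>R \<delta>)"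
    using positive_in_span_simple[OF assms] by (rule nonneg_spanE)
  have "\<beta> \<bullet> \<beta> = (\<Sum>\<delta>\<in>simple. c \<delta> * (\<delta> \<bullet> \<beta>))"
    by (subst (1) c(2)) (simp add: inner_sum_left)
  also have "\<dots> \<le> 0"
    using c(1) none by (intro sum_nonpos) (simp add: mult_nonneg_nonpos not_less)
  finally show False using positive_inner_self[OF assms] by simp
qed

lemma positive_root_conj_simple:
  "\<beta> \<in> P \<Longrightarrow> \<exists>ws \<alpha>. set ws \<subseteq> simple \<and> \<alpha> \<in> simple \<and> refl_prod ws \<alpha> = \<beta>"
proof (induction "card {\<gamma>\<in>P. \<gamma> \<bullet> v < \<beta> \<bullet> v}" arbitrary: \<beta> rule: less_induct)
  case less
  show ?case
  proof (cases "\<beta> \<in> simple")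
    case True then show ?thesis by (intro exI[of _ "[]"] exI[of _ \<beta>]) simp
  next
    case False
    \<comment> \<open>Reflecting in a simple root \<open>\<alpha>\<close> with \<open>\<alpha> \<bullet> \<beta> > 0\<close> gives a positive root of smaller height.\<close>
    obtain \<alpha> where \<alpha>: "\<alpha> \<in> simple" "\<alpha> \<bullet> \<beta> > 0" using exists_simple_inner_pos[OF less.prems] by blast
    have \<alpha>P: "\<alpha> \<in> P" using \<alpha>(1) simple_positive by blast
    define \<beta>' where "\<beta>' = refl \<alpha> \<beta>"
    have \<beta>'P: "\<beta>' \<in> P" unfolding \<beta>'_def using simple_refl_positive \<alpha>(1) less.prems False by blast
    have "\<beta> \<bullet> \<alpha> > 0" using \<alpha>(2) by (simp add: inner_commute)
    then have "(2 * (\<beta> \<bullet> \<alpha>) / (\<alpha> \<bullet> \<alpha>)) * (\<alpha> \<bullet> v) > 0"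
      using positive_inner_self[OF \<alpha>P] positive_inner_v[OF \<alpha>P] by (intro mult_pos_pos divide_pos_pos) auto
    moreover have "\<beta>' \<bullet> v = \<beta> \<bullet> v - (2 * (\<beta> \<bullet> \<alpha>) / (\<alpha> \<bullet> \<alpha>)) * (\<alpha> \<bullet> v)"
      unfolding \<beta>'_def refl_def by (simp add: inner_diff_left)
    ultimately have lt: "\<beta>' \<bullet> v < \<beta> \<bullet> v" by linarith
    then have "{\<gamma>\<in>P. \<gamma> \<bullet> v < \<beta>' \<bullet> v} \<subseteq> {\<gamma>\<in>P. \<gamma> \<bullet> v < \<beta> \<bullet> v}" by auto
    moreover have "\<beta>' \<in> {\<gamma>\<in>P. \<gamma> \<bullet> v < \<beta> \<bullet> v} - {\<gamma>\<in>P. \<gamma> \<bullet> v < \<beta>' \<bullet> v}"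
      using lt \<beta>'P by simp
    ultimately have "{\<gamma>\<in>P. \<gamma> \<bullet> v < \<beta>' \<bullet> v} \<subset> {\<gamma>\<in>P. \<gamma> \<bullet> v < \<beta> \<bullet> v}" by blast
    then have "card {\<gamma>\<in>P. \<gamma> \<bullet> v < \<beta>' \<bullet> v} < card {\<gamma>\<in>P. \<gamma> \<bullet> v < \<beta> \<bullet> v}"
      by (rule psubset_card_mono[rotated]) (simp add: finite_P)
    then obtain ws \<alpha>' where ws: "set ws \<subseteq> simple" "\<alpha>' \<in> simple" "refl_prod ws \<alpha>' = \<beta>'"
      using less.hyps \<beta>'P by blast
    have "refl_prod (\<alpha> # ws) \<alpha>' = \<beta>"
      using ws(3) refl_refl[OF positive_nonzero[OF \<alpha>P]] unfolding \<beta>'_def by simp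
    then show ?thesis using ws \<alpha>(1) by (intro exI[of _ "\<alpha> # ws"] exI[of _ \<alpha>']) auto
  qed
qed

lemma refl_conj_simple:
  assumes "\<beta> \<in> R"
  obtains us \<alpha> where "set us \<subseteq> simple" "\<alpha> \<in> simple"
    "refl \<beta> = refl_prod us \<circ> refl \<alpha> \<circ> refl_prod (rev us)"
proof -
  obtain us \<alpha> where us: "set us \<subseteq> simple" "\<alpha> \<in> simple" "refl_prod us \<alpha> = pos_root \<beta>"
    using positive_root_conj_simple[OF pos_root_positive[OF assms]] by blast
  have usR: "set us \<subseteq> R" using us(1) simple_root by blast
  have "refl \<beta> = refl (refl_prod us \<alpha>)" using us(3) by (simp add: pos_root_def refl_minus_root)
  also have "\<dots> = refl (refl_prod us \<alpha>) \<circ> refl_prod us \<circ> refl_prod (rev us)"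
    using refl_prod_rev[OF usR] by (simp add: comp_assoc)
  also have "\<dots> = refl_prod us \<circ> refl \<alpha> \<circ> refl_prod (rev us)"
    using weyl_refl_conjugate[OF refl_prod_weyl[OF usR]] by simp
  finally show ?thesis using that us(1,2) by blast
qed

lemma weyl_simple_word: "w \<in> W \<Longrightarrow> \<exists>ws. set ws \<subseteq> simple \<and> w = refl_prod ws"
proof (induction rule: weyl_group.induct)
  case id_in then show ?case by (intro exI[of _ "[]"]) simp
next
  case (step w \<beta>)
  then obtain ws where ws: "set ws \<subseteq> simple" "w = refl_prod ws" by blast
  obtain us \<alpha> where "set us \<subseteq> simple" "\<alpha> \<in> simple"
    "refl \<beta> = refl_prod us \<circ> refl \<alpha> \<circ> refl_prod (rev us)"
    using refl_conj_simple[OF step(2)] .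
  then have "refl \<beta> \<circ> w = refl_prod (us @ [\<alpha>] @ rev us @ ws)" "set (us @ [\<alpha>] @ rev us @ ws) \<subseteq> simple"
    using ws by (simp_all add: refl_prod_append comp_assoc)
  then show ?case by blast
qed

lemma exchange_condition:
  "set ws \<subseteq> simple \<Longrightarrow> a \<in> simple \<Longrightarrow> refl_prod ws a \<notin> P \<Longrightarrow>
   \<exists>ws'. set ws' \<subseteq> simple \<and> length ws' + 1 = length ws \<and> refl_prod ws' = refl_prod ws \<circ> refl a"
proof (induction ws)
  case Nil then show ?case using simple_positive by auto
next
  case (Cons b ws)
  have b: "b \<in> simple" and ws: "set ws \<subseteq> simple" using Cons.prems by auto
  show ?case
  proof (cases "refl_prod ws a \<in> P")
    case False
    then obtain ws' where "set ws' \<subseteq> simple" "length ws' + 1 = length ws"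
      "refl_prod ws' = refl_prod ws \<circ> refl a"
      using Cons.IH ws Cons.prems(2) by blast
    then show ?thesis using b by (intro exI[of _ "b # ws'"]) (simp add: comp_assoc)
  next
    case True
    \<comment> \<open>\<open>refl b\<close> is the only simple reflection taking the positive root \<open>refl_prod ws a\<close> to a negative one.\<close>
    have "refl b (refl_prod ws a) \<notin> P" using Cons.prems(3) by simp
    then have "refl_prod ws a = b" using simple_refl_positive[OF b True] by blast
    moreover have "set ws \<subseteq> R" using ws simple_root by blast
    ultimately have "refl b \<circ> refl_prod ws = refl_prod ws \<circ> refl a"
      using weyl_refl_conjugate[OF refl_prod_weyl, of ws a] by simp
    then have "refl_prod (b # ws) \<circ> refl a = refl_prod ws \<circ> (refl a \<circ> refl a)"
      by (simp add: comp_assoc)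
    also have "\<dots> = refl_prod ws" using refl_refl_comp simple_root Cons.prems(2) by simp
    finally have "refl_prod ws = refl_prod (b # ws) \<circ> refl a" by (rule sym)
    then show ?thesis using ws by (intro exI[of _ ws]) (simp del: refl_prod_Cons)
  qed
qed

lemma refl_prod_preserving_positive:
  "set ws \<subseteq> simple \<Longrightarrow> \<forall>\<alpha>\<in>P. refl_prod ws \<alpha> \<in> P \<Longrightarrow> refl_prod ws = id"
proof (induction "length ws" arbitrary: ws rule: less_induct)
  case less
  show ?case
  proof (cases ws rule: rev_exhaust)
    case (snoc ws0 a)
    have a: "a \<in> simple" and ws0: "set ws0 \<subseteq> simple" using less.prems snoc by auto
    have ws0W: "refl_prod ws0 \<in> W" using refl_prod_weyl ws0 simple_root by blast
    have "refl_prod ws a = - refl_prod ws0 a"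
      using snoc refl_self[OF positive_nonzero[OF simple_positive[OF a]]] weyl_minus[OF ws0W]
      by (simp add: refl_prod_append)
    moreover have "refl_prod ws a \<in> P" using less.prems(2) simple_positive[OF a] by blast
    ultimately have "refl_prod ws0 a \<notin> P" by (metis minus_minus minus_not_positive)
    then obtain ws' where ws': "set ws' \<subseteq> simple" "length ws' + 1 = length ws0"
      "refl_prod ws' = refl_prod ws0 \<circ> refl a"
      using exchange_condition[OF ws0 a] by blast
    have "refl_prod ws' = refl_prod ws" using ws'(3) snoc by (simp add: refl_prod_append)
    then show ?thesis using less.hyps[of ws'] ws' snoc less.prems(2) by simp
  qed simp
qed

lemma weyl_preserving_positive_id: "w \<in> W \<Longrightarrow> \<forall>\<alpha>\<in>P. w \<alpha> \<in> P \<Longrightarrow> w = id"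
  using weyl_simple_word refl_prod_preserving_positive by blast

lemma wsign_prod: "wsign P w = (\<Prod>\<alpha>\<in>P. if w \<alpha> \<in> P then 1 else -1)"
proof -
  have "(\<Prod>\<alpha>\<in>P. if w \<alpha> \<in> P then 1 else (-1::int)) =
     (\<Prod>\<alpha>\<in>P \<inter> {x. w x \<in> P}. 1) * (\<Prod>\<alpha>\<in>P \<inter> - {x. w x \<in> P}. -1)"
    by (rule prod.If_cases[OF finite_P])
  also have "\<dots> = (-1) ^ card (P \<inter> - {x. w x \<in> P})" by simp
  also have "P \<inter> - {x. w x \<in> P} = {\<alpha>\<in>P. w \<alpha> \<notin> P}" by auto
  finally show ?thesis unfolding wsign_def by simp
qed

lemma wsign_mult:
  assumes w: "w \<in> W" and u: "u \<in> W"
  shows "wsign P (w \<circ> u) = wsign P w * wsign P u"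
proof -
  have sign: "(if (w \<circ> u) \<alpha> \<in> P then 1 else -1::int) =
      (if w (pos_root (u \<alpha>)) \<in> P then 1 else -1) * (if u \<alpha> \<in> P then 1 else -1)"
    if \<alpha>: "\<alpha> \<in> P" for \<alpha>
  proof (cases "u \<alpha> \<in> P")
    case False
    have "w (- u \<alpha>) \<in> R" using weyl_root[OF w minus_root[OF weyl_root[OF u positive_root[OF \<alpha>]]]] .
    then have "w (u \<alpha>) \<in> P \<longleftrightarrow> w (- u \<alpha>) \<notin> P"
      using positive_or_minus minus_not_positive weyl_minus[OF w] by (metis minus_minus)
    then show ?thesis using False by (simp add: pos_root_def)
  qed (simp add: pos_root_def)
  have "wsign P (w \<circ> u) =
      (\<Prod>\<alpha>\<in>P. (if w (pos_root (u \<alpha>)) \<in> P then 1 else -1) * (if u \<alpha> \<in> P then 1 else -1))"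
    unfolding wsign_prod using sign by (intro prod.cong) auto
  also have "\<dots> = (\<Prod>\<alpha>\<in>P. (if w (pos_root (u \<alpha>)) \<in> P then 1 else -1)) * wsign P u"
    by (simp add: prod.distrib wsign_prod)
  also have "(\<Prod>\<alpha>\<in>P. (if w (pos_root (u \<alpha>)) \<in> P then 1 else -1::int)) = wsign P w"
    unfolding wsign_prod
    using prod.reindex_bij_betw[OF bij_betw_pos_root_weyl[OF u], of "\<lambda>\<beta>. if w \<beta> \<in> P then 1 else -1"]
    by simp
  finally show ?thesis .
qed

lemma wsign_cases: "wsign P w = 1 \<or> wsign P w = -1"
  unfolding wsign_def by (simp add: minus_one_power_iff)

lemma wsign_id: "wsign P id = 1"
  unfolding wsign_def by simp

lemma wsign_inv:
  assumes w: "w \<in> W" shows "wsign P (inv w) = wsign P w"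
proof -
  have "wsign P (inv w) * wsign P w = 1"
    using wsign_mult[OF weyl_inv_in[OF w] w] weyl_inv[OF w] wsign_id by simp
  then show ?thesis using wsign_cases[of w] wsign_cases[of "inv w"] by auto
qed

lemma wsign_refl:
  assumes "\<beta> \<in> R" shows "wsign P (refl \<beta>) = -1"
proof -
  \<comment> \<open>\<open>refl \<beta>\<close> is conjugate to a simple reflection, which inverts exactly one positive root.\<close>
  obtain us \<alpha> where us: "set us \<subseteq> simple" "\<alpha> \<in> simple"
    and conj: "refl \<beta> = refl_prod us \<circ> refl \<alpha> \<circ> refl_prod (rev us)"
    using refl_conj_simple[OF assms] .
  have usR: "set us \<subseteq> R" "set (rev us) \<subseteq> R" using us(1) simple_root by auto
  note u = refl_prod_weyl[OF usR(1)] and u' = refl_prod_weyl[OF usR(2)]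
    and r = weyl_refl[OF simple_root[OF us(2)]]
  have "wsign P (refl_prod (rev us)) * wsign P (refl_prod us) = 1"
    using wsign_mult[OF u' u] refl_prod_rev[OF usR(1)] wsign_id by simp
  moreover have "wsign P (refl \<alpha>) = -1"
    unfolding wsign_def simple_refl_inversions[OF us(2)] by simp
  moreover have "wsign P (refl \<beta>) =
      wsign P (refl_prod us) * wsign P (refl \<alpha>) * wsign P (refl_prod (rev us))"
    unfolding conj using wsign_mult[OF weyl_comp[OF u r] u'] wsign_mult[OF u r] by simp
  ultimately show ?thesis by (simp add: mult.commute)
qed

abbreviation \<rho> where "\<rho> \<equiv> rho P"

abbreviation \<Lambda> where "\<Lambda> \<equiv> weight_lattice R"

definition coroot_pair :: "'a \<Rightarrow> 'a \<Rightarrow> real" where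
  "coroot_pair x \<alpha> = 2 * (x \<bullet> \<alpha>) / (\<alpha> \<bullet> \<alpha>)"

lemma coroot_pair_add: "coroot_pair (x + y) \<alpha> = coroot_pair x \<alpha> + coroot_pair y \<alpha>"
  unfolding coroot_pair_def by (simp add: inner_add_left add_divide_distrib distrib_left)

lemma coroot_pair_diff: "coroot_pair (x - y) \<alpha> = coroot_pair x \<alpha> - coroot_pair y \<alpha>"
  unfolding coroot_pair_def by (simp add: inner_diff_left diff_divide_distrib right_diff_distrib)

lemma coroot_pair_scaleR: "coroot_pair (c *\<^sub>R x) \<alpha> = c * coroot_pair x \<alpha>"
  unfolding coroot_pair_def by simp

lemma coroot_pair_sum: "coroot_pair (sum f A) \<alpha> = (\<Sum>x\<in>A. coroot_pair (f x) \<alpha>)"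
  unfolding coroot_pair_def by (simp add: inner_sum_left sum_divide_distrib sum_distrib_left)

lemma coroot_pair_minus_root: "coroot_pair x (- \<alpha>) = - coroot_pair x \<alpha>"
  unfolding coroot_pair_def by simp

lemma coroot_pair_weyl: "w \<in> W \<Longrightarrow> coroot_pair (w x) (w \<alpha>) = coroot_pair x \<alpha>"
  unfolding coroot_pair_def by (simp add: weyl_inner)

lemma refl_coroot_pair: "refl \<alpha> x = x - coroot_pair x \<alpha> *\<^sub>R \<alpha>"
  unfolding refl_def coroot_pair_def ..

lemma coroot_pair_root: "\<alpha> \<in> R \<Longrightarrow> \<beta> \<in> R \<Longrightarrow> coroot_pair \<beta> \<alpha> \<in> \<int>"
  unfolding coroot_pair_def using cartan_integer by blast

lemma coroot_pair_pos_iff: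
  assumes "\<alpha> \<noteq> 0" shows "coroot_pair x \<alpha> > 0 \<longleftrightarrow> x \<bullet> \<alpha> > 0"
    and "coroot_pair x \<alpha> \<ge> 0 \<longleftrightarrow> x \<bullet> \<alpha> \<ge> 0"
proof -
  have "\<not> \<alpha> \<bullet> \<alpha> < 0" "\<not> \<alpha> \<bullet> \<alpha> \<le> 0" using assms by (simp_all add: not_less not_le)
  then show "coroot_pair x \<alpha> > 0 \<longleftrightarrow> x \<bullet> \<alpha> > 0" "coroot_pair x \<alpha> \<ge> 0 \<longleftrightarrow> x \<bullet> \<alpha> \<ge> 0"
    unfolding coroot_pair_def by (auto simp: zero_less_divide_iff zero_le_divide_iff)
qed

lemma weyl_rho:
  assumes w: "w \<in> W"
  shows "w \<rho> = \<rho> + (\<Sum>\<alpha>\<in>{\<alpha>\<in>P. w \<alpha> \<notin> P}. w \<alpha>)"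
proof -
  let ?X = "{\<alpha>. w \<alpha> \<in> P}"
  have N: "P - ?X = {\<alpha>\<in>P. w \<alpha> \<notin> P}" by auto
  have "(\<Sum>\<beta>\<in>P. \<beta>) = (\<Sum>\<alpha>\<in>P. pos_root (w \<alpha>))"
    using sum.reindex_bij_betw[OF bij_betw_pos_root_weyl[OF w], of "\<lambda>\<beta>. \<beta>"] by simp
  also have "\<dots> = (\<Sum>\<alpha>\<in>P \<inter> ?X. pos_root (w \<alpha>)) + (\<Sum>\<alpha>\<in>P - ?X. pos_root (w \<alpha>))"
    by (rule sum.Int_Diff[OF finite_P])
  also have "(\<Sum>\<alpha>\<in>P \<inter> ?X. pos_root (w \<alpha>)) = (\<Sum>\<alpha>\<in>P \<inter> ?X. w \<alpha>)"
    by (rule sum.cong) (auto simp: pos_root_def)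
  also have "(\<Sum>\<alpha>\<in>P - ?X. pos_root (w \<alpha>)) = - (\<Sum>\<alpha>\<in>P - ?X. w \<alpha>)"
    unfolding sum_negf[symmetric] by (rule sum.cong) (auto simp: pos_root_def)
  finally have "(\<Sum>\<alpha>\<in>P. w \<alpha>) = (\<Sum>\<beta>\<in>P. \<beta>) + 2 *\<^sub>R (\<Sum>\<alpha>\<in>P - ?X. w \<alpha>)"
    using sum.Int_Diff[OF finite_P, of w ?X] by (simp add: scaleR_2 algebra_simps)
  then have "w \<rho> = (1/2) *\<^sub>R ((\<Sum>\<beta>\<in>P. \<beta>) + 2 *\<^sub>R (\<Sum>\<alpha>\<in>P - ?X. w \<alpha>))"
    unfolding rho_def by (simp add: weyl_scaleR[OF w] weyl_sum[OF w])
  then show ?thesis unfolding N by (simp add: rho_def scaleR_add_right)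
qed

lemma refl_simple_rho:
  assumes "\<alpha> \<in> simple" shows "refl \<alpha> \<rho> = \<rho> - \<alpha>"
  using weyl_rho[OF weyl_refl[OF simple_root[OF assms]]] simple_refl_inversions[OF assms]
    refl_self[OF root_nonzero[OF simple_root[OF assms]]] by simp

lemma coroot_pair_rho_simple:
  assumes "\<alpha> \<in> simple" shows "coroot_pair \<rho> \<alpha> = 1"
proof -
  have "coroot_pair \<rho> \<alpha> *\<^sub>R \<alpha> = 1 *\<^sub>R \<alpha>"
    using refl_simple_rho[OF assms] by (simp add: refl_coroot_pair)
  then have "coroot_pair \<rho> \<alpha> = 1 \<or> \<alpha> = 0" by (simp only: scaleR_cancel_right)
  then show ?thesis using root_nonzero[OF simple_root[OF assms]] by blast
qed

lemma simple_inner_rho: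
  assumes "\<alpha> \<in> simple" shows "\<alpha> \<bullet> \<rho> > 0"
proof -
  have "coroot_pair \<rho> \<alpha> > 0" using coroot_pair_rho_simple[OF assms] by simp
  then have "\<rho> \<bullet> \<alpha> > 0"
    using coroot_pair_pos_iff(1)[OF root_nonzero[OF simple_root[OF assms]]] by blast
  then show ?thesis by (simp only: inner_commute)
qed

lemma rho_inner_positive:
  assumes "\<alpha> \<in> P" shows "\<rho> \<bullet> \<alpha> > 0"
proof -
  have pos: "\<forall>\<delta>\<in>simple. \<delta> \<bullet> \<rho> > 0" using simple_inner_rho by blast
  have "\<alpha> \<bullet> \<rho> \<ge> 0"
    using pos by (intro nonneg_span_inner_nonneg[OF _ positive_in_span_simple[OF assms]]) auto
  moreover have "\<alpha> \<bullet> \<rho> \<noteq> 0"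
    using nonneg_span_inner_eq_zero[OF finite_simple pos positive_in_span_simple[OF assms]]
      positive_nonzero[OF assms] by blast
  ultimately show ?thesis by (simp add: inner_commute)
qed

lemma dominant_of_simple:
  assumes "\<forall>\<delta>\<in>simple. x \<bullet> \<delta> \<ge> 0" "\<alpha> \<in> P" shows "x \<bullet> \<alpha> \<ge> 0"
  using nonneg_span_inner_nonneg[OF _ positive_in_span_simple[OF assms(2)], of x] assms(1)
  by (simp add: inner_commute)

lemma weight_lattice_iff: "x \<in> \<Lambda> \<longleftrightarrow> (\<forall>\<alpha>\<in>R. coroot_pair x \<alpha> \<in> \<int>)"
  unfolding weight_lattice_def coroot_pair_def by simp

lemma weight_lattice_add: "x \<in> \<Lambda> \<Longrightarrow> y \<in> \<Lambda> \<Longrightarrow> x + y \<in> \<Lambda>"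
  and weight_lattice_diff: "x \<in> \<Lambda> \<Longrightarrow> y \<in> \<Lambda> \<Longrightarrow> x - y \<in> \<Lambda>"
  and weight_lattice_of_nat_scaleR: "x \<in> \<Lambda> \<Longrightarrow> of_nat k *\<^sub>R x \<in> \<Lambda>"
  by (auto simp: weight_lattice_iff coroot_pair_add coroot_pair_diff coroot_pair_scaleR
      intro: Ints_mult)

lemma zero_in_weight_lattice: "0 \<in> \<Lambda>"
  unfolding weight_lattice_iff coroot_pair_def by simp

lemma weight_lattice_minus: "x \<in> \<Lambda> \<Longrightarrow> - x \<in> \<Lambda>"
  using weight_lattice_diff[OF zero_in_weight_lattice] by simp

lemma weight_lattice_sum: "(\<And>a. a \<in> A \<Longrightarrow> f a \<in> \<Lambda>) \<Longrightarrow> sum f A \<in> \<Lambda>"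
  by (induction A rule: infinite_finite_induct) (auto intro: weight_lattice_add zero_in_weight_lattice)

lemma root_in_weight_lattice: "\<alpha> \<in> R \<Longrightarrow> \<alpha> \<in> \<Lambda>"
  unfolding weight_lattice_iff using coroot_pair_root by blast

lemma weyl_weight_lattice:
  assumes w: "w \<in> W" and x: "x \<in> \<Lambda>" shows "w x \<in> \<Lambda>"
  unfolding weight_lattice_iff
proof
  fix \<alpha> assume "\<alpha> \<in> R"
  then have "coroot_pair x (inv w \<alpha>) \<in> \<int>"
    using x weyl_root[OF weyl_inv_in[OF w]] unfolding weight_lattice_iff by blast
  then show "coroot_pair (w x) \<alpha> \<in> \<int>" using coroot_pair_weyl[OF w, of x "inv w \<alpha>"] w by simp
qed

lemma rho_in_weight_lattice: "\<rho> \<in> \<Lambda>"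
  unfolding weight_lattice_iff
proof
  fix \<beta> assume \<beta>: "\<beta> \<in> R"
  \<comment> \<open>Move \<open>pos_root \<beta>\<close> to a simple root \<open>\<alpha>\<close> by some \<open>u \<in> W\<close>; \<open>inv u \<rho>\<close> differs from \<open>\<rho>\<close> by roots.\<close>
  obtain us \<alpha> where us: "set us \<subseteq> simple" "\<alpha> \<in> simple" "refl_prod us \<alpha> = pos_root \<beta>"
    using positive_root_conj_simple[OF pos_root_positive[OF \<beta>]] by blast
  define u where "u = refl_prod us"
  have u: "u \<in> W" "inv u \<in> W" unfolding u_def using refl_prod_weyl us(1) simple_root
    by (blast intro: weyl_inv_in)+
  let ?N = "{\<gamma>\<in>P. inv u \<gamma> \<notin> P}"
  have "coroot_pair \<rho> (pos_root \<beta>) = coroot_pair (u (inv u \<rho>)) (u \<alpha>)"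
    using us(3) u unfolding u_def by simp
  also have "\<dots> = coroot_pair (\<rho> + (\<Sum>\<gamma>\<in>?N. inv u \<gamma>)) \<alpha>"
    using coroot_pair_weyl[OF u(1)] weyl_rho[OF u(2)] by simp
  also have "\<dots> = 1 + (\<Sum>\<gamma>\<in>?N. coroot_pair (inv u \<gamma>) \<alpha>)"
    by (simp add: coroot_pair_add coroot_pair_sum coroot_pair_rho_simple[OF us(2)])
  also have "\<dots> \<in> \<int>"
    using coroot_pair_root[OF simple_root[OF us(2)] weyl_root[OF u(2) positive_root]]
    by (intro Ints_add Ints_sum) auto
  finally show "coroot_pair \<rho> \<beta> \<in> \<int>"
    by (cases "\<beta> \<in> P") (auto simp: pos_root_def coroot_pair_minus_root)
qed

definition strictly_dominant :: "'a \<Rightarrow> bool" where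
  "strictly_dominant x \<longleftrightarrow> (\<forall>\<alpha>\<in>P. x \<bullet> \<alpha> > 0)"

lemma strictly_dominant_minus_rho:
  assumes x: "x \<in> \<Lambda>" "strictly_dominant x" shows "x - \<rho> \<in> dominant R P"
proof -
  have "(x - \<rho>) \<bullet> \<delta> \<ge> 0" if \<delta>: "\<delta> \<in> simple" for \<delta>
  proof -
    have \<delta>0: "\<delta> \<noteq> 0" using \<delta> simple_root root_nonzero by blast
    obtain n :: int where n: "coroot_pair x \<delta> = of_int n"
      using x(1) simple_root[OF \<delta>] unfolding weight_lattice_iff by (metis Ints_cases)
    have "coroot_pair x \<delta> > 0"
      using x(2) \<delta> simple_positive coroot_pair_pos_iff(1)[OF \<delta>0] unfolding strictly_dominant_def
      by blast
    then have "coroot_pair x \<delta> \<ge> 1" unfolding n by simp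
    then have "coroot_pair (x - \<rho>) \<delta> \<ge> 0"
      using coroot_pair_rho_simple[OF \<delta>] by (simp add: coroot_pair_diff)
    then show ?thesis using coroot_pair_pos_iff(2)[OF \<delta>0] by simp
  qed
  then have "\<forall>\<alpha>\<in>P. (x - \<rho>) \<bullet> \<alpha> \<ge> 0" using dominant_of_simple by blast
  moreover have "x - \<rho> \<in> \<Lambda>" using weight_lattice_diff[OF x(1) rho_in_weight_lattice] .
  ultimately show ?thesis unfolding dominant_def by simp
qed

lemma dominant_plus_rho:
  assumes "\<mu> \<in> dominant R P" shows "\<mu> + \<rho> \<in> \<Lambda>" "strictly_dominant (\<mu> + \<rho>)"
  using assms weight_lattice_add[OF _ rho_in_weight_lattice] rho_inner_positive
  unfolding dominant_def strictly_dominant_def by (auto simp: inner_add_left add_nonneg_pos)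

lemma exists_weyl_dominant: "\<exists>w\<in>W. \<forall>\<alpha>\<in>P. w y \<bullet> \<alpha> \<ge> 0"
proof -
  \<comment> \<open>Take \<open>w\<close> maximising \<open>w y \<bullet> \<rho>\<close>; a reflection could increase it at any wall \<open>w y\<close> lies behind.\<close>
  have "Max ((\<lambda>u. u y \<bullet> \<rho>) ` W) \<in> (\<lambda>u. u y \<bullet> \<rho>) ` W"
    using finite_weyl_group weyl_group.id_in by (intro Max_in) auto
  then obtain w where w: "w \<in> W" and w_max: "w y \<bullet> \<rho> = Max ((\<lambda>u. u y \<bullet> \<rho>) ` W)" by auto
  have max: "u y \<bullet> \<rho> \<le> w y \<bullet> \<rho>" if "u \<in> W" for u
    unfolding w_max using finite_weyl_group that by (intro Max_ge) auto
  show ?thesis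
  proof (intro bexI[OF _ w] ballI)
    fix \<alpha> assume \<alpha>: "\<alpha> \<in> P"
    show "w y \<bullet> \<alpha> \<ge> 0"
    proof (rule ccontr)
      assume "\<not> w y \<bullet> \<alpha> \<ge> 0"
      then have "coroot_pair (w y) \<alpha> < 0"
        using coroot_pair_pos_iff(2)[OF positive_nonzero[OF \<alpha>], of "w y"] by simp
      then have "coroot_pair (w y) \<alpha> * (\<alpha> \<bullet> \<rho>) < 0"
        using rho_inner_positive[OF \<alpha>] by (simp add: inner_commute mult_neg_pos)
      moreover have "(refl \<alpha> \<circ> w) y \<bullet> \<rho> = w y \<bullet> \<rho> - coroot_pair (w y) \<alpha> * (\<alpha> \<bullet> \<rho>)"
        by (simp add: refl_coroot_pair inner_diff_left)
      moreover have "(refl \<alpha> \<circ> w) y \<bullet> \<rho> \<le> w y \<bullet> \<rho>"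
        using max weyl_group.step[OF w positive_root[OF \<alpha>]] by blast
      ultimately show False by simp
    qed
  qed
qed

lemma weyl_strictly_dominant_id:
  assumes w: "w \<in> W" and x: "strictly_dominant x" and wx: "strictly_dominant (w x)"
  shows "w = id"
proof (rule weyl_preserving_positive_id[OF w], rule ballI, rule ccontr)
  fix \<alpha> assume \<alpha>: "\<alpha> \<in> P" and "w \<alpha> \<notin> P"
  then have "- w \<alpha> \<in> P" using positive_or_minus weyl_root[OF w positive_root] by blast
  then have "w x \<bullet> w \<alpha> < 0" using wx unfolding strictly_dominant_def by fastforce
  moreover have "x \<bullet> \<alpha> > 0" using x \<alpha> unfolding strictly_dominant_def by blast
  ultimately show False using weyl_inner[OF w] by simp
qed

end

section \<open>The group ring of the weight space\<close>

text \<open>The group ring is realised by \<open>'a \<Rightarrow>\<^sub>0 int\<close>, whose product is the convolution \<open>conv\<close>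
  of the definitions (lemma \<open>conv_coeff\<close>).\<close>

type_synonym 'a group_ring = "'a \<Rightarrow>\<^sub>0 int"

abbreviation coeff :: "'a group_ring \<Rightarrow> 'a \<Rightarrow> int" where "coeff \<equiv> Poly_Mapping.lookup"

abbreviation supp :: "'a group_ring \<Rightarrow> 'a set" where "supp \<equiv> Poly_Mapping.keys"

abbreviation e :: "'a \<Rightarrow> 'a group_ring" where "e x \<equiv> Poly_Mapping.single x 1"

lemma coeff_mult:
  fixes F G :: "'a::ab_group_add group_ring"
  shows "coeff (F * G) k = (\<Sum>l\<in>supp F. coeff F l * coeff G (k - l))"
proof -
  have "Sum_any (\<lambda>q. coeff G q when k = l + q) = coeff G (k - l)" for l
  proof -
    have "(\<lambda>q. coeff G q when k = l + q) = (\<lambda>q. if q = k - l then coeff G q else 0)"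
      by (auto simp: fun_eq_iff when_def)
    then show ?thesis by (simp only:) (rule Sum_any.delta)
  qed
  then have "coeff (F * G) k = Sum_any (\<lambda>l. coeff F l * coeff G (k - l))"
    unfolding lookup_mult by simp
  also have "\<dots> = (\<Sum>l\<in>supp F. coeff F l * coeff G (k - l))"
    by (rule Sum_any.expand_superset) (auto simp: in_keys_iff)
  finally show ?thesis .
qed

lemma coeff_single_mult:
  fixes G :: "'a::ab_group_add group_ring"
  shows "coeff (Poly_Mapping.single a c * G) k = c * coeff G (k - a)"
  by (cases "c = 0") (simp_all add: coeff_mult)

lemma of_int_group_ring: "(of_int s :: 'a::ab_group_add group_ring) = Poly_Mapping.single 0 s"
proof (cases s rule: int_cases)
  case (nonneg n)
  then show ?thesis by (simp add: single_of_nat)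
next
  case (neg n)
  have "(of_int s :: 'a group_ring) = - of_nat (Suc n)" using neg by simp
  also have "\<dots> = Poly_Mapping.single 0 (- of_nat (Suc n))" by (simp only: single_of_nat single_uminus)
  finally show ?thesis using neg by simp
qed

lemma coeff_of_int_mult:
  fixes F :: "'a::ab_group_add group_ring"
  shows "coeff (of_int s * F) k = s * coeff F k"
  by (simp add: of_int_group_ring coeff_single_mult)

lemma e_mult: "e (a::'a::ab_group_add) * e b = e (a + b)"
  by (simp add: mult_single)

lemma coeff_e_mult:
  fixes G :: "'a::ab_group_add group_ring"
  shows "coeff (e a * G) k = coeff G (k - a)"
  by (simp add: coeff_single_mult)

lemma coeff_e: "coeff (e a) k = (if a = k then 1 else 0)"
  by (simp add: lookup_single when_def)

lemma prod_e: "finite A \<Longrightarrow> (\<Prod>x\<in>A. e (f x :: 'a::ab_group_add)) = e (\<Sum>x\<in>A. f x)"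
  by (induction A rule: finite_induct) (simp_all add: e_mult)

lemma supp_mult: "x \<in> supp (F * G) \<Longrightarrow> \<exists>a\<in>supp F. \<exists>b\<in>supp (G::'a::ab_group_add group_ring). x = a + b"
  using keys_mult[of F G] by blast

lemma coeff_one_minus_e_mult:
  "coeff ((1 - e (- \<alpha>)) * H) y = coeff H y - coeff H (y + (\<alpha>::'a::ab_group_add))"
  by (simp add: left_diff_distrib lookup_minus coeff_e_mult)

lemma conv_coeff:
  fixes F G :: "'a::ab_group_add group_ring"
  shows "conv (coeff F) (coeff G) = coeff (F * G)"
  by (rule ext) (simp add: conv_def fsupp_def coeff_mult Poly_Mapping.keys.rep_eq)

lemma fsupp_coeff: "fsupp (coeff F) = supp F"
  by (simp add: fsupp_def Poly_Mapping.keys.rep_eq)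

lemma coeff_Abs_poly_mapping: "finite (fsupp f) \<Longrightarrow> coeff (Abs_poly_mapping f) = f"
  unfolding fsupp_def by simp

text \<open>An element whose coefficients sum to zero along every \<open>\<beta>\<close>-string \<open>x + \<int>\<beta>\<close> is divisible by
  \<open>1 - e\<^sub>-\<^sub>\<beta>\<close>, the quotient being given by the tail sums over \<open>x + \<nat>\<beta>\<close>.\<close>

definition int_multiples :: "'a::real_vector \<Rightarrow> 'a set" where
  "int_multiples \<beta> = range (\<lambda>k::int. of_int k *\<^sub>R \<beta>)"

definition nat_multiples :: "'a::real_vector \<Rightarrow> 'a set" where
  "nat_multiples \<beta> = range (\<lambda>k::nat. of_nat k *\<^sub>R \<beta>)"

definition string_sum :: "'a::real_vector \<Rightarrow> 'a group_ring \<Rightarrow> 'a \<Rightarrow> int" where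
  "string_sum \<beta> F x = (\<Sum>y\<in>{y\<in>supp F. y - x \<in> int_multiples \<beta>}. coeff F y)"

definition tail_sum :: "'a::real_vector \<Rightarrow> 'a group_ring \<Rightarrow> 'a \<Rightarrow> int" where
  "tail_sum \<beta> F x = (\<Sum>y\<in>{y\<in>supp F. y - x \<in> nat_multiples \<beta>}. coeff F y)"

lemma int_multiples_diff:
  assumes "a \<in> int_multiples \<beta>" "b \<in> int_multiples \<beta>" shows "a - b \<in> int_multiples \<beta>"
proof -
  obtain i j :: int where "a = of_int i *\<^sub>R \<beta>" "b = of_int j *\<^sub>R \<beta>"
    using assms unfolding int_multiples_def by blast
  then have "a - b = of_int (i - j) *\<^sub>R \<beta>" by (simp add: scaleR_diff_left)
  then show ?thesis unfolding int_multiples_def by blast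
qed

lemma nat_multiples_subset: "nat_multiples \<beta> \<subseteq> int_multiples \<beta>"
proof
  fix u assume "u \<in> nat_multiples \<beta>"
  then obtain k :: nat where "u = of_int (int k) *\<^sub>R \<beta>" unfolding nat_multiples_def by auto
  then show "u \<in> int_multiples \<beta>" unfolding int_multiples_def by blast
qed

lemma translates_meet_finite_set:
  fixes \<alpha> \<beta> :: "'a::real_vector"
  assumes "finite A" and meet: "\<And>n::nat. \<exists>y\<in>A. y - (x + of_nat n *\<^sub>R \<alpha>) \<in> int_multiples \<beta>"
  shows "\<exists>t. \<alpha> = t *\<^sub>R \<beta>"
proof -
  \<comment> \<open>Pigeonhole: two of the infinitely many translates \<open>x + n\<alpha> + \<int>\<beta>\<close> meet \<open>A\<close> in the same point.\<close>
  define f where "f n = (SOME y. y \<in> A \<and> y - (x + of_nat n *\<^sub>R \<alpha>) \<in> int_multiples \<beta>)" for n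
  have f: "f n \<in> A \<and> f n - (x + of_nat n *\<^sub>R \<alpha>) \<in> int_multiples \<beta>" for n
  proof -
    have "\<exists>y. y \<in> A \<and> y - (x + of_nat n *\<^sub>R \<alpha>) \<in> int_multiples \<beta>" using meet[of n] by blast
    then show ?thesis unfolding f_def by (rule someI_ex)
  qed
  have "\<not> inj f"
  proof
    assume "inj f"
    have "range f \<subseteq> A" using f by blast
    then have "finite (range f)" using assms(1) by (rule finite_subset)
    then show False using \<open>inj f\<close> finite_imageD by blast
  qed
  then obtain n m where nm: "n \<noteq> m" "f n = f m" unfolding inj_def by blast
  obtain i j :: int where "f n - (x + of_nat n *\<^sub>R \<alpha>) = of_int i *\<^sub>R \<beta>"
    "f m - (x + of_nat m *\<^sub>R \<alpha>) = of_int j *\<^sub>R \<beta>"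
    using f[of n] f[of m] unfolding int_multiples_def by blast
  then have "(real m - real n) *\<^sub>R \<alpha> = (of_int i - of_int j) *\<^sub>R \<beta>"
    using nm(2) by (simp add: algebra_simps)
  moreover have "real m - real n \<noteq> 0" using nm(1) by simp
  ultimately have "\<alpha> = ((of_int i - of_int j) / (real m - real n)) *\<^sub>R \<beta>"
    by (metis (no_types, lifting) divide_inverse_commute eq_vector_fraction_iff)
  then show ?thesis by blast
qed

lemma string_sum_superset:
  assumes "finite A" "supp F \<subseteq> A"
  shows "string_sum \<beta> F x = (\<Sum>y\<in>{y\<in>A. y - x \<in> int_multiples \<beta>}. coeff F y)"
  unfolding string_sum_def
  by (rule sum.mono_neutral_left) (use assms in \<open>auto simp: in_keys_iff\<close>)

lemma string_sum_one_minus_e_mult: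
  "string_sum \<beta> ((1 - e (- \<alpha>)) * H) x = string_sum \<beta> H x - string_sum \<beta> H (x + \<alpha>)"
proof -
  let ?A = "supp H \<union> (\<lambda>z. z - \<alpha>) ` supp H"
  let ?S = "{y\<in>?A. y - x \<in> int_multiples \<beta>}"
  have fin: "finite ?A" by simp
  have sub: "supp ((1 - e (- \<alpha>)) * H) \<subseteq> ?A"
  proof
    fix y assume "y \<in> supp ((1 - e (- \<alpha>)) * H)"
    then have "y \<in> supp H \<or> y + \<alpha> \<in> supp H" by (auto simp: in_keys_iff coeff_one_minus_e_mult)
    then show "y \<in> ?A" by (metis UnI1 UnI2 add_diff_cancel image_eqI)
  qed
  have "string_sum \<beta> ((1 - e (- \<alpha>)) * H) x = (\<Sum>y\<in>?S. coeff H y - coeff H (y + \<alpha>))"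
    unfolding string_sum_superset[OF fin sub] coeff_one_minus_e_mult ..
  also have "\<dots> = (\<Sum>y\<in>?S. coeff H y) - (\<Sum>y\<in>?S. coeff H (y + \<alpha>))"
    by (rule sum_subtractf)
  also have "(\<Sum>y\<in>?S. coeff H y) = string_sum \<beta> H x"
    by (rule string_sum_superset[symmetric]) auto
  also have "(\<Sum>y\<in>?S. coeff H (y + \<alpha>)) = (\<Sum>z\<in>(\<lambda>y. y + \<alpha>) ` ?S. coeff H z)"
    by (rule sum.reindex[symmetric, unfolded comp_def]) (auto intro: inj_onI)
  also have "(\<lambda>y. y + \<alpha>) ` ?S = {z\<in>(\<lambda>y. y + \<alpha>) ` ?A. z - (x + \<alpha>) \<in> int_multiples \<beta>}"
    by (auto simp: algebra_simps)
  also have "(\<Sum>z\<in>\<dots>. coeff H z) = string_sum \<beta> H (x + \<alpha>)"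
    by (rule string_sum_superset[symmetric]) (auto intro: image_eqI[of _ _ "_ - \<alpha>"])
  finally show ?thesis .
qed

lemma nat_multiples_step:
  "z - y \<in> nat_multiples \<beta> \<longleftrightarrow> z = y \<or> z - (y + \<beta>) \<in> nat_multiples \<beta>"
proof
  assume "z - y \<in> nat_multiples \<beta>"
  then obtain k :: nat where k: "z - y = of_nat k *\<^sub>R \<beta>" unfolding nat_multiples_def by blast
  show "z = y \<or> z - (y + \<beta>) \<in> nat_multiples \<beta>"
  proof (cases k)
    case (Suc k')
    then have "z - (y + \<beta>) = of_nat k' *\<^sub>R \<beta>" using k by (simp add: algebra_simps)
    then show ?thesis unfolding nat_multiples_def by blast
  qed (use k in simp)
next
  assume "z = y \<or> z - (y + \<beta>) \<in> nat_multiples \<beta>"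
  then show "z - y \<in> nat_multiples \<beta>"
  proof
    assume "z - (y + \<beta>) \<in> nat_multiples \<beta>"
    then obtain k :: nat where "z - (y + \<beta>) = of_nat k *\<^sub>R \<beta>" unfolding nat_multiples_def by blast
    then have "z - y = of_nat (Suc k) *\<^sub>R \<beta>" by (simp add: algebra_simps)
    then show ?thesis unfolding nat_multiples_def by blast
  qed (auto simp: nat_multiples_def intro: range_eqI[of _ _ 0])
qed

lemma minus_notin_nat_multiples:
  assumes "\<beta> \<noteq> 0" shows "- \<beta> \<notin> nat_multiples \<beta>"
proof
  assume "- \<beta> \<in> nat_multiples \<beta>"
  then obtain k :: nat where "- \<beta> = of_nat k *\<^sub>R \<beta>" unfolding nat_multiples_def by blast
  then have "of_nat k *\<^sub>R \<beta> + \<beta> = 0" by (metis neg_eq_iff_add_eq_0 add.commute)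
  then have "(of_nat k + 1) *\<^sub>R \<beta> = 0" by (simp add: scaleR_add_left)
  then show False using assms by (simp add: add_eq_0_iff_both_eq_0)
qed

lemma tail_sum_step:
  assumes "\<beta> \<noteq> 0" shows "tail_sum \<beta> G y = coeff G y + tail_sum \<beta> G (y + \<beta>)"
proof -
  let ?Z = "{z\<in>supp G. z = y}" and ?T = "{z\<in>supp G. z - (y + \<beta>) \<in> nat_multiples \<beta>}"
  have "{z\<in>supp G. z - y \<in> nat_multiples \<beta>} = ?Z \<union> ?T" using nat_multiples_step by blast
  moreover have "?Z \<inter> ?T = {}" using minus_notin_nat_multiples[OF assms] by auto
  moreover have "(\<Sum>z\<in>?Z. coeff G z) = coeff G y"
  proof (cases "y \<in> supp G")
    case True then have "?Z = {y}" by auto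
    then show ?thesis by simp
  qed (simp add: in_keys_iff)
  ultimately show ?thesis unfolding tail_sum_def by (simp add: sum.union_disjoint)
qed

lemma finite_ray_meets_ray:
  fixes \<beta> z z' :: "'a::real_vector"
  assumes "\<beta> \<noteq> 0"
  shows "finite {y. \<exists>k j::nat. y = z - of_nat k *\<^sub>R \<beta> \<and> y = z' + of_nat j *\<^sub>R \<beta>}"
    (is "finite ?Y")
proof (cases "?Y = {}")
  case False
  then obtain k0 j0 :: nat where "z - of_nat k0 *\<^sub>R \<beta> = z' + of_nat j0 *\<^sub>R \<beta>" by blast
  then have "z - z' = of_nat k0 *\<^sub>R \<beta> + of_nat j0 *\<^sub>R \<beta>" by (simp add: algebra_simps)
  then have kj0: "z - z' = of_nat (k0 + j0) *\<^sub>R \<beta>" by (simp only: of_nat_add scaleR_add_left)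
  have "?Y \<subseteq> (\<lambda>k. z - of_nat k *\<^sub>R \<beta>) ` {..k0 + j0}"
  proof
    fix y assume "y \<in> ?Y"
    then obtain k j :: nat where y: "y = z - of_nat k *\<^sub>R \<beta>" "y = z' + of_nat j *\<^sub>R \<beta>" by blast
    then have "real (k + j) *\<^sub>R \<beta> = real (k0 + j0) *\<^sub>R \<beta>"
      using kj0 by (simp add: algebra_simps)
    then have "k + j = k0 + j0" using assms by simp
    then show "y \<in> (\<lambda>k. z - of_nat k *\<^sub>R \<beta>) ` {..k0 + j0}" using y(1) by auto
  qed
  then show ?thesis by (rule finite_subset) simp
qed (simp only: finite.emptyI)

lemma tail_sum_support:
  fixes \<beta> :: "'a::real_vector"
  assumes zero: "string_sum \<beta> G y = 0" and ne: "tail_sum \<beta> G y \<noteq> 0"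
  shows "\<exists>z\<in>supp G. \<exists>z'\<in>supp G. \<exists>k j::nat. y = z - of_nat k *\<^sub>R \<beta> \<and> y = z' + of_nat j *\<^sub>R \<beta>"
proof -
  let ?S1 = "{z\<in>supp G. z - y \<in> nat_multiples \<beta>}"
  let ?S2 = "{z\<in>supp G. z - y \<in> int_multiples \<beta> \<and> z - y \<notin> nat_multiples \<beta>}"
  have split: "{z\<in>supp G. z - y \<in> int_multiples \<beta>} = ?S1 \<union> ?S2"
    using nat_multiples_subset by auto
  have "string_sum \<beta> G y = tail_sum \<beta> G y + (\<Sum>z\<in>?S2. coeff G z)"
    unfolding string_sum_def tail_sum_def split
    by (rule sum.union_disjoint) ((rule finite_subset[OF _ finite_keys[of G]], blast)+, blast)
  then have "(\<Sum>z\<in>?S2. coeff G z) \<noteq> 0" using zero ne by simp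
  then obtain z' where "z' \<in> ?S2" by (rule sum.not_neutral_contains_not_neutral)
  then have z': "z' \<in> supp G" "z' - y \<in> int_multiples \<beta>" "z' - y \<notin> nat_multiples \<beta>" by auto
  obtain j :: int where j: "z' - y = of_int j *\<^sub>R \<beta>" using z'(2) unfolding int_multiples_def by blast
  have "j < 0"
  proof (rule ccontr)
    assume "\<not> j < 0"
    then have "z' - y = of_nat (nat j) *\<^sub>R \<beta>" using j by simp
    then show False using z'(3) unfolding nat_multiples_def by blast
  qed
  then have "y = z' + of_nat (nat (- j)) *\<^sub>R \<beta>" using j by (simp add: algebra_simps)
  moreover obtain z where "z \<in> ?S1"
    using ne unfolding tail_sum_def by (rule sum.not_neutral_contains_not_neutral)
  then have z: "z \<in> supp G" "z - y \<in> nat_multiples \<beta>" by auto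
  moreover obtain k :: nat where "z - y = of_nat k *\<^sub>R \<beta>"
    using z(2) unfolding nat_multiples_def by blast
  then have "y = z - of_nat k *\<^sub>R \<beta>" by (simp add: algebra_simps)
  ultimately show ?thesis using z'(1) by blast
qed

definition denom_prod :: "'a::ab_group_add set \<Rightarrow> 'a group_ring" where
  "denom_prod T = (\<Prod>\<alpha>\<in>T. 1 - e (- \<alpha>))"

lemma coeff_denom_prod_insert:
  "finite T \<Longrightarrow> \<beta> \<notin> T \<Longrightarrow>
    coeff (denom_prod (insert \<beta> T)) y = coeff (denom_prod T) y - coeff (denom_prod T) (y + \<beta>)"
  by (simp add: denom_prod_def coeff_one_minus_e_mult)

lemma supp_denom_prod:
  "finite T \<Longrightarrow> y \<in> supp (denom_prod T) \<Longrightarrow> \<exists>S\<subseteq>T. y = - (\<Sum>a\<in>S. a)"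
proof (induction T arbitrary: y rule: finite_induct)
  case empty
  then show ?case by (simp add: denom_prod_def)
next
  case (insert \<beta> T)
  then have "y \<in> supp (denom_prod T) \<or> y + \<beta> \<in> supp (denom_prod T)"
    by (auto simp: in_keys_iff coeff_denom_prod_insert)
  then show ?case
  proof
    assume "y + \<beta> \<in> supp (denom_prod T)"
    then obtain S where S: "S \<subseteq> T" "y + \<beta> = - (\<Sum>a\<in>S. a)" using insert.IH by blast
    have "y = (y + \<beta>) - \<beta>" by simp
    also have "\<dots> = - (\<beta> + (\<Sum>a\<in>S. a))" unfolding S(2) by (simp add: algebra_simps)
    also have "\<dots> = - (\<Sum>a\<in>insert \<beta> S. a)"
      using insert.hyps finite_subset[OF S(1)] S(1) by (subst sum.insert) auto
    finally have "y = - (\<Sum>a\<in>insert \<beta> S. a)" .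
    then show ?thesis using S(1) by blast
  qed (use insert.IH in blast)
qed

lemma coeff_denom_prod_0:
  fixes T :: "'a::real_inner set"
  assumes "finite T" "\<forall>\<alpha>\<in>T. \<alpha> \<bullet> v > 0"
  shows "coeff (denom_prod T) 0 = 1"
  using assms
proof (induction T rule: finite_induct)
  case empty
  then show ?case by (simp add: denom_prod_def lookup_one)
next
  case (insert \<beta> T)
  have "\<beta> \<notin> supp (denom_prod T)"
  proof
    assume "\<beta> \<in> supp (denom_prod T)"
    then obtain S where "S \<subseteq> T" "\<beta> = - (\<Sum>a\<in>S. a)" using supp_denom_prod insert.hyps(1) by blast
    moreover have "(\<Sum>a\<in>S. a) \<bullet> v \<ge> 0"
      using \<open>S \<subseteq> T\<close> insert.prems by (auto simp: inner_sum_left intro: sum_nonneg less_imp_le)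
    ultimately show False using insert.prems by simp
  qed
  then show ?case using insert by (simp add: coeff_denom_prod_insert in_keys_iff)
qed

definition denom_factor :: "'a::real_vector \<Rightarrow> 'a group_ring" where
  "denom_factor \<gamma> = e ((1/2) *\<^sub>R \<gamma>) - e (- ((1/2) *\<^sub>R \<gamma>))"

lemma denom_factor_eq: "denom_factor \<alpha> = e ((1/2) *\<^sub>R \<alpha>) * (1 - e (- \<alpha>))"
proof -
  have "(1/2) *\<^sub>R \<alpha> + - \<alpha> = - ((1/2) *\<^sub>R \<alpha>)" by (simp add: algebra_simps scaleR_2[symmetric])
  then show ?thesis unfolding denom_factor_def by (simp add: right_diff_distrib e_mult)
qed

lemma denom_factor_minus: "denom_factor (- \<gamma>) = - denom_factor \<gamma>"
  unfolding denom_factor_def by simp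

definition adams_op :: "nat \<Rightarrow> 'a::real_vector group_ring \<Rightarrow> 'a group_ring" where
  "adams_op a F = Abs_poly_mapping (\<lambda>\<nu>. coeff F ((1 / real a) *\<^sub>R \<nu>))"

lemma coeff_adams_op:
  assumes "a > 0" shows "coeff (adams_op a F) \<nu> = coeff F ((1 / real a) *\<^sub>R \<nu>)"
proof -
  have "{\<nu>. coeff F ((1 / real a) *\<^sub>R \<nu>) \<noteq> 0} \<subseteq> (\<lambda>x. real a *\<^sub>R x) ` supp F"
  proof
    fix \<nu> assume "\<nu> \<in> {\<nu>. coeff F ((1 / real a) *\<^sub>R \<nu>) \<noteq> 0}"
    then have "(1 / real a) *\<^sub>R \<nu> \<in> supp F" by (simp add: in_keys_iff)
    moreover have "\<nu> = real a *\<^sub>R ((1 / real a) *\<^sub>R \<nu>)" using assms by simp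
    ultimately show "\<nu> \<in> (\<lambda>x. real a *\<^sub>R x) ` supp F" by blast
  qed
  then have "finite {\<nu>. coeff F ((1 / real a) *\<^sub>R \<nu>) \<noteq> 0}" by (rule finite_subset) simp
  then show ?thesis unfolding adams_op_def by simp
qed

lemma adams_eq_coeff_adams_op: "a > 0 \<Longrightarrow> adams a (coeff F) = coeff (adams_op a F)"
  by (rule ext) (simp add: adams_def coeff_adams_op)

context positive_root_system
begin

section \<open>Anti-invariants and alternants\<close>

definition pullback :: "('a \<Rightarrow> 'a) \<Rightarrow> 'a group_ring \<Rightarrow> 'a group_ring" where
  "pullback w F = Abs_poly_mapping (\<lambda>x. coeff F (w x))"

lemma coeff_pullback:
  assumes w: "w \<in> W" shows "coeff (pullback w F) x = coeff F (w x)"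
proof -
  have "{x. coeff F (w x) \<noteq> 0} = w -` {y. coeff F y \<noteq> 0}" by auto
  moreover have "finite (w -` {y. coeff F y \<noteq> 0})"
    by (rule finite_vimageI) (simp_all add: weyl_inj[OF w])
  ultimately show ?thesis unfolding pullback_def by simp
qed

lemma supp_pullback: "w \<in> W \<Longrightarrow> supp (pullback w F) = w -` supp F"
  by (auto simp: in_keys_iff coeff_pullback)

lemma pullback_mult:
  assumes w: "w \<in> W" shows "pullback w (F * G) = pullback w F * pullback w G"
proof (rule poly_mapping_eqI)
  fix x
  have bij: "bij_betw w (w -` supp F) (supp F)"
    using weyl_bij[OF w] by (auto simp: bij_betw_def bij_def inj_on_def intro: inj_onI dest: injD)
  have "coeff (pullback w F * pullback w G) x = (\<Sum>l\<in>w -` supp F. coeff F (w l) * coeff G (w x - w l))"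
    by (simp add: coeff_mult supp_pullback[OF w] coeff_pullback[OF w] weyl_diff[OF w])
  also have "\<dots> = (\<Sum>m\<in>supp F. coeff F m * coeff G (w x - m))"
    using sum.reindex_bij_betw[OF bij, of "\<lambda>m. coeff F m * coeff G (w x - m)"] by simp
  also have "\<dots> = coeff (pullback w (F * G)) x"
    by (simp add: coeff_mult coeff_pullback[OF w])
  finally show "coeff (pullback w (F * G)) x = coeff (pullback w F * pullback w G) x" ..
qed

lemma pullback_diff: "w \<in> W \<Longrightarrow> pullback w (F - G) = pullback w F - pullback w G"
  by (rule poly_mapping_eqI) (simp add: coeff_pullback lookup_minus)

lemma pullback_one:
  assumes w: "w \<in> W" shows "pullback w 1 = 1"
proof (rule poly_mapping_eqI)
  fix x
  have "w x = 0 \<longleftrightarrow> x = 0" using weyl_inj[OF w] weyl_zero[OF w] by (metis injD)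
  then show "coeff (pullback w 1) x = coeff 1 x" by (simp add: coeff_pullback[OF w] lookup_one)
qed

lemma pullback_e:
  assumes w: "w \<in> W" shows "pullback w (e a) = e (inv w a)"
proof (rule poly_mapping_eqI)
  fix x
  show "coeff (pullback w (e a)) x = coeff (e (inv w a)) x"
    using w by (auto simp: coeff_pullback[OF w] coeff_e)
qed

lemma pullback_prod:
  assumes w: "w \<in> W" shows "pullback w (\<Prod>a\<in>A. f a) = (\<Prod>a\<in>A. pullback w (f a))"
  by (induction A rule: infinite_finite_induct) (simp_all add: pullback_one[OF w] pullback_mult[OF w])

definition anti_invariant :: "'a group_ring \<Rightarrow> bool" where
  "anti_invariant F \<longleftrightarrow> (\<forall>w\<in>W. pullback w F = of_int (wsign P w) * F)"

definition invariant :: "'a group_ring \<Rightarrow> bool" where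
  "invariant F \<longleftrightarrow> (\<forall>w\<in>W. pullback w F = F)"

lemma anti_invariant_iff:
  "anti_invariant F \<longleftrightarrow> (\<forall>w\<in>W. \<forall>x. coeff F (w x) = wsign P w * coeff F x)"
proof
  assume "anti_invariant F"
  then show "\<forall>w\<in>W. \<forall>x. coeff F (w x) = wsign P w * coeff F x"
    unfolding anti_invariant_def by (metis coeff_pullback coeff_of_int_mult)
next
  assume "\<forall>w\<in>W. \<forall>x. coeff F (w x) = wsign P w * coeff F x"
  then show "anti_invariant F" unfolding anti_invariant_def
    by (auto intro!: poly_mapping_eqI simp: coeff_pullback coeff_of_int_mult)
qed

lemma anti_invariant_coeff:
  "anti_invariant F \<Longrightarrow> w \<in> W \<Longrightarrow> coeff F (w x) = wsign P w * coeff F x"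
  unfolding anti_invariant_iff by blast

lemma anti_invariant_coeff_refl_fixed:
  assumes F: "anti_invariant F" and \<alpha>: "\<alpha> \<in> R" and x: "refl \<alpha> x = x"
  shows "coeff F x = 0"
  using anti_invariant_coeff[OF F weyl_refl[OF \<alpha>], of x] wsign_refl[OF \<alpha>] x by simp

lemma invariant_mult_anti_invariant:
  assumes "invariant F" "anti_invariant G" shows "anti_invariant (F * G)"
  using assms unfolding anti_invariant_def invariant_def by (simp add: pullback_mult ac_simps)

definition Alt :: "'a \<Rightarrow> 'a group_ring" where
  "Alt \<mu> = (\<Sum>w\<in>W. Poly_Mapping.single (w \<mu>) (wsign P w))"

lemma coeff_Alt: "coeff (Alt \<mu>) \<nu> = alternant R P \<mu> \<nu>"
  unfolding Alt_def alternant_def lookup_sum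
  by (intro sum.cong) (auto simp: lookup_single when_def)

lemma alternant_eq_coeff_Alt: "alternant R P \<mu> = coeff (Alt \<mu>)"
  by (rule ext) (simp add: coeff_Alt)

lemma alternant_nonzero_orbit:
  assumes "alternant R P \<mu> z \<noteq> 0" shows "\<exists>w\<in>W. w \<mu> = z"
proof (rule ccontr)
  assume "\<not> (\<exists>w\<in>W. w \<mu> = z)"
  then have "alternant R P \<mu> z = 0" unfolding alternant_def by (intro sum.neutral) auto
  then show False using assms by simp
qed

lemma bij_betw_weyl_comp:
  assumes w: "w \<in> W" shows "bij_betw (\<lambda>u. w \<circ> u) W W"
proof (rule bij_betw_byWitness[where f' = "\<lambda>u. inv w \<circ> u"])
  show "\<forall>u\<in>W. inv w \<circ> (w \<circ> u) = u" "\<forall>u\<in>W. w \<circ> (inv w \<circ> u) = u"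
    using weyl_inv[OF w] by (simp_all add: comp_assoc[symmetric])
  show "(\<lambda>u. w \<circ> u) ` W \<subseteq> W" "(\<lambda>u. inv w \<circ> u) ` W \<subseteq> W"
    using weyl_comp[OF w] weyl_comp[OF weyl_inv_in[OF w]] by auto
qed

lemma alternant_weyl:
  assumes w: "w \<in> W"
  shows "alternant R P \<mu> (w x) = wsign P w * alternant R P \<mu> x"
proof -
  have "alternant R P \<mu> (w x) = (\<Sum>u\<in>W. if (w \<circ> u) \<mu> = w x then wsign P (w \<circ> u) else 0)"
    unfolding alternant_def
    using sum.reindex_bij_betw[OF bij_betw_weyl_comp[OF w], of "\<lambda>u. if u \<mu> = w x then wsign P u else 0"]
    by simp
  also have "\<dots> = (\<Sum>u\<in>W. wsign P w * (if u \<mu> = x then wsign P u else 0))"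
  proof (rule sum.cong)
    fix u assume u: "u \<in> W"
    have "(w \<circ> u) \<mu> = w x \<longleftrightarrow> u \<mu> = x" using weyl_inj[OF w] by (auto dest: injD)
    then show "(if (w \<circ> u) \<mu> = w x then wsign P (w \<circ> u) else 0)
        = wsign P w * (if u \<mu> = x then wsign P u else 0)"
      using wsign_mult[OF w u] by simp
  qed simp
  also have "\<dots> = wsign P w * alternant R P \<mu> x"
    unfolding alternant_def by (simp add: sum_distrib_left)
  finally show ?thesis .
qed

lemma anti_invariant_Alt: "anti_invariant (Alt \<mu>)"
  unfolding anti_invariant_iff coeff_Alt using alternant_weyl by blast

lemma alternant_strictly_dominant:
  assumes x: "strictly_dominant x" and x': "strictly_dominant x'" and w0: "w0 \<in> W"
  shows "alternant R P x (w0 x') = (if x = x' then wsign P w0 else 0)"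
proof -
  have "alternant R P x x' = (\<Sum>w\<in>W. if w = id \<and> x = x' then 1 else 0)"
    unfolding alternant_def
  proof (rule sum.cong)
    fix w assume "w \<in> W"
    then have "w x = x' \<longleftrightarrow> w = id \<and> x = x'"
      using weyl_strictly_dominant_id[of w x] x x' by auto
    then show "(if w x = x' then wsign P w else 0) = (if w = id \<and> x = x' then 1 else 0)"
      using wsign_id by simp
  qed simp
  also have "\<dots> = (if x = x' then 1 else 0)"
    using finite_weyl_group weyl_group.id_in[of R] by (simp add: sum.delta')
  finally show ?thesis using alternant_weyl[OF w0] by simp
qed

lemma anti_invariant_supp_orbit:
  assumes F: "anti_invariant F" and y: "coeff F y \<noteq> 0"
  obtains x w where "x \<in> supp F" "strictly_dominant x" "w \<in> W" "w x = y"
proof -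
  \<comment> \<open>Move \<open>y\<close> into the dominant chamber; it cannot lie on a wall, where coefficients vanish.\<close>
  obtain w where w: "w \<in> W" "\<forall>\<alpha>\<in>P. w y \<bullet> \<alpha> \<ge> 0" using exists_weyl_dominant by blast
  have wy: "coeff F (w y) \<noteq> 0"
    using anti_invariant_coeff[OF F w(1)] y wsign_cases[of w] by auto
  have "strictly_dominant (w y)"
    unfolding strictly_dominant_def
  proof
    fix \<alpha> assume \<alpha>: "\<alpha> \<in> P"
    show "w y \<bullet> \<alpha> > 0"
    proof (rule ccontr)
      assume "\<not> w y \<bullet> \<alpha> > 0"
      moreover have "w y \<bullet> \<alpha> \<ge> 0" using w(2) \<alpha> by blast
      ultimately have "refl \<alpha> (w y) = w y"
        using refl_fixed_iff[OF positive_nonzero[OF \<alpha>]] by simp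
      then show False using anti_invariant_coeff_refl_fixed[OF F positive_root[OF \<alpha>]] wy by blast
    qed
  qed
  moreover have "w y \<in> supp F" using wy by (simp add: in_keys_iff)
  moreover have "inv w (w y) = y" using w(1) by simp
  ultimately show ?thesis using that weyl_inv_in[OF w(1)] by blast
qed

lemma anti_invariant_decomp:
  assumes F: "anti_invariant F"
  shows "F = (\<Sum>x\<in>{x\<in>supp F. strictly_dominant x}. of_int (coeff F x) * Alt x)"
proof (rule poly_mapping_eqI)
  fix y
  let ?K = "{x\<in>supp F. strictly_dominant x}"
  have rhs: "coeff (\<Sum>x\<in>?K. of_int (coeff F x) * Alt x) y = (\<Sum>x\<in>?K. coeff F x * alternant R P x y)"
    by (simp add: lookup_sum coeff_of_int_mult coeff_Alt)
  show "coeff F y = coeff (\<Sum>x\<in>?K. of_int (coeff F x) * Alt x) y"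
  proof (cases "\<exists>x0\<in>?K. \<exists>w0\<in>W. w0 x0 = y")
    case True
    then obtain x0 w0 where x0: "x0 \<in> ?K" and w0: "w0 \<in> W" "w0 x0 = y" by blast
    have "(\<Sum>x\<in>?K. coeff F x * alternant R P x y) = (\<Sum>x\<in>?K. if x = x0 then coeff F x * wsign P w0 else 0)"
      using alternant_strictly_dominant[of _ x0 w0] x0 w0 by (intro sum.cong) auto
    also have "\<dots> = coeff F y"
      using x0 anti_invariant_coeff[OF F w0(1), of x0] w0(2) by (simp add: mult.commute)
    finally show ?thesis using rhs by simp
  next
    case False
    have "coeff F y = 0"
    proof (rule ccontr)
      assume "coeff F y \<noteq> 0"
      then obtain x w where "x \<in> ?K" "w \<in> W" "w x = y"
        by (rule anti_invariant_supp_orbit[OF F]) blast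
      then show False using False by blast
    qed
    moreover have "alternant R P x y = 0" if "x \<in> ?K" for x
      using False that alternant_nonzero_orbit by blast
    ultimately show ?thesis using rhs by simp
  qed
qed

lemma rho_strictly_dominant: "strictly_dominant \<rho>"
  unfolding strictly_dominant_def using rho_inner_positive by blast

lemma alternant_rho_rho: "alternant R P \<rho> \<rho> = 1"
  using alternant_strictly_dominant[OF rho_strictly_dominant rho_strictly_dominant weyl_group.id_in]
  by (simp add: wsign_id)

lemma weyl_rho_eq:
  assumes w: "w \<in> W" and ge: "w \<rho> \<bullet> \<rho> \<ge> \<rho> \<bullet> \<rho>" shows "w \<rho> = \<rho>"
proof -
  have "(w \<rho> - \<rho>) \<bullet> (w \<rho> - \<rho>) = w \<rho> \<bullet> w \<rho> - 2 * (w \<rho> \<bullet> \<rho>) + \<rho> \<bullet> \<rho>"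
    by (simp add: inner_diff_left inner_diff_right inner_commute)
  also have "w \<rho> \<bullet> w \<rho> = \<rho> \<bullet> \<rho>" by (rule weyl_inner[OF w])
  finally have "(w \<rho> - \<rho>) \<bullet> (w \<rho> - \<rho>) \<le> 0" using ge by simp
  then show ?thesis by (metis antisym inner_ge_zero inner_eq_zero_iff right_minus_eq)
qed

lemma coeff_mult_Alt_rho_top:
  assumes m: "m \<in> supp H" and top: "\<forall>l\<in>supp H. l \<bullet> \<rho> \<le> m \<bullet> \<rho>"
  shows "coeff (H * Alt \<rho>) (m + \<rho>) = coeff H m"
proof -
  \<comment> \<open>\<open>e\<^sub>m e\<^sub>\<rho>\<close> is the only product of support terms reaching \<open>m + \<rho>\<close>, as \<open>\<rho>\<close> is the unique
    \<open>\<rho>\<close>-highest element of its orbit.\<close>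
  have "alternant R P \<rho> (m + \<rho> - l) = 0" if l: "l \<in> supp H" "l \<noteq> m" for l
  proof (rule ccontr)
    assume "alternant R P \<rho> (m + \<rho> - l) \<noteq> 0"
    then obtain w where w: "w \<in> W" "w \<rho> = m + \<rho> - l" using alternant_nonzero_orbit by blast
    then have "w \<rho> \<bullet> \<rho> \<ge> \<rho> \<bullet> \<rho>" using top l(1) by (simp add: inner_diff_left inner_add_left)
    then show False using weyl_rho_eq[OF w(1)] w(2) l(2) by simp
  qed
  then have "coeff (H * Alt \<rho>) (m + \<rho>) = (\<Sum>l\<in>supp H. if l = m then coeff H l else 0)"
    unfolding coeff_mult coeff_Alt by (intro sum.cong) (simp_all add: alternant_rho_rho)
  then show ?thesis using m by simp
qed

lemma Alt_rho_mult_eq_0: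
  assumes "Alt \<rho> * H = 0" shows "H = 0"
proof (rule ccontr)
  assume "H \<noteq> 0"
  then have "(\<lambda>l. l \<bullet> \<rho>) ` supp H \<noteq> {}" by simp
  then have "Max ((\<lambda>l. l \<bullet> \<rho>) ` supp H) \<in> (\<lambda>l. l \<bullet> \<rho>) ` supp H" by (intro Max_in) auto
  then obtain m where m: "m \<in> supp H" "m \<bullet> \<rho> = Max ((\<lambda>l. l \<bullet> \<rho>) ` supp H)" by auto
  have "\<forall>l\<in>supp H. l \<bullet> \<rho> \<le> m \<bullet> \<rho>" unfolding m(2) by (intro ballI Max_ge) auto
  then have "coeff (H * Alt \<rho>) (m + \<rho>) \<noteq> 0"
    using coeff_mult_Alt_rho_top[OF m(1)] m(1) by (simp add: in_keys_iff)
  then show False using assms by (simp add: mult.commute)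
qed

lemma Alt_rho_cancel: "Alt \<rho> * F = Alt \<rho> * G \<Longrightarrow> F = G"
  using Alt_rho_mult_eq_0[of "F - G"] by (simp add: right_diff_distrib)

section \<open>Divisibility of anti-invariants\<close>

lemma string_sum_anti_invariant:
  assumes F: "anti_invariant F" and F\<Lambda>: "supp F \<subseteq> \<Lambda>" and \<beta>: "\<beta> \<in> R"
  shows "string_sum \<beta> F x = 0"
proof -
  \<comment> \<open>\<open>refl \<beta>\<close> permutes each \<open>\<beta>\<close>-string of lattice points and negates the coefficients.\<close>
  let ?S = "{y\<in>supp F. y - x \<in> int_multiples \<beta>}"
  have neg: "coeff F (refl \<beta> y) = - coeff F y" for y
    using anti_invariant_coeff[OF F weyl_refl[OF \<beta>]] wsign_refl[OF \<beta>] by simp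
  have into: "refl \<beta> y \<in> ?S" if y: "y \<in> ?S" for y
  proof -
    have "y \<in> \<Lambda>" using y F\<Lambda> by blast
    then have "coroot_pair y \<beta> \<in> \<int>" using \<beta> weight_lattice_iff by blast
    then obtain c :: int where "coroot_pair y \<beta> = of_int c" by (rule Ints_cases)
    then have "coroot_pair y \<beta> *\<^sub>R \<beta> \<in> int_multiples \<beta>"
      using rangeI[of "\<lambda>k::int. of_int k *\<^sub>R \<beta>" c] unfolding int_multiples_def by simp
    then have "(y - x) - coroot_pair y \<beta> *\<^sub>R \<beta> \<in> int_multiples \<beta>"
      using int_multiples_diff y by blast
    moreover have "refl \<beta> y - x = (y - x) - coroot_pair y \<beta> *\<^sub>R \<beta>"
      by (simp add: refl_coroot_pair algebra_simps)
    ultimately have "refl \<beta> y - x \<in> int_multiples \<beta>" by metis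
    then show ?thesis using neg y by (simp add: in_keys_iff)
  qed
  have "bij_betw (refl \<beta>) ?S ?S"
    by (rule bij_betw_byWitness[where f' = "refl \<beta>"])
      (use into refl_refl[OF root_nonzero[OF \<beta>]] in auto)
  then have "(\<Sum>y\<in>?S. coeff F y) = (\<Sum>y\<in>?S. coeff F (refl \<beta> y))"
    using sum.reindex_bij_betw[of "refl \<beta>" ?S ?S "coeff F"] by simp
  then show ?thesis unfolding string_sum_def neg sum_negf by simp
qed

lemma string_sum_cancel:
  assumes \<alpha>: "\<alpha> \<in> P" and \<beta>: "\<beta> \<in> P" and ne: "\<alpha> \<noteq> \<beta>"
    and zero: "\<And>x. string_sum \<beta> ((1 - e (- \<alpha>)) * H) x = 0"
  shows "string_sum \<beta> H x = 0"
proof (rule ccontr)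
  \<comment> \<open>Otherwise the string sums along \<open>x + \<nat>\<alpha>\<close> are all equal and nonzero, so the finite support
    meets infinitely many translates of the \<open>\<beta>\<close>-string, forcing \<open>\<alpha>\<close> to be a multiple of \<open>\<beta>\<close>.\<close>
  assume nonzero: "string_sum \<beta> H x \<noteq> 0"
  have same: "string_sum \<beta> H (x + of_nat n *\<^sub>R \<alpha>) = string_sum \<beta> H x" for n
  proof (induction n)
    case (Suc n)
    have "x + of_nat (Suc n) *\<^sub>R \<alpha> = (x + of_nat n *\<^sub>R \<alpha>) + \<alpha>"
      by (simp add: algebra_simps scaleR_add_left)
    then show ?case unfolding \<open>x + of_nat (Suc n) *\<^sub>R \<alpha> = _\<close>
      using zero[of "x + of_nat n *\<^sub>R \<alpha>"] string_sum_one_minus_e_mult[of \<beta> \<alpha> H "x + of_nat n *\<^sub>R \<alpha>"] Suc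
      by simp
  qed simp
  have "\<exists>y\<in>supp H. y - (x + of_nat n *\<^sub>R \<alpha>) \<in> int_multiples \<beta>" for n
  proof (rule ccontr)
    assume "\<not> (\<exists>y\<in>supp H. y - (x + of_nat n *\<^sub>R \<alpha>) \<in> int_multiples \<beta>)"
    then have "{y\<in>supp H. y - (x + of_nat n *\<^sub>R \<alpha>) \<in> int_multiples \<beta>} = {}" by blast
    then have "string_sum \<beta> H (x + of_nat n *\<^sub>R \<alpha>) = 0" unfolding string_sum_def by (simp only: sum.empty)
    then show False using same nonzero by simp
  qed
  then obtain t where "\<alpha> = t *\<^sub>R \<beta>" using translates_meet_finite_set[OF finite_keys] by blast
  then have "t = 1 \<or> t = -1" using root_multiple[OF positive_root[OF \<beta>]] positive_root[OF \<alpha>] by simp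
  then show False using \<open>\<alpha> = t *\<^sub>R \<beta>\<close> ne \<alpha> minus_not_positive[OF \<beta>] by auto
qed

lemma string_sums_zero_imp_dvd:
  assumes zero: "\<And>x. string_sum \<beta> G x = 0" and \<beta>: "\<beta> \<noteq> 0" "\<beta> \<in> \<Lambda>" and G\<Lambda>: "supp G \<subseteq> \<Lambda>"
  shows "\<exists>G'. G = (1 - e (- \<beta>)) * G' \<and> supp G' \<subseteq> \<Lambda>"
proof -
  define Y where "Y z z' = {y. \<exists>k j::nat. y = z - of_nat k *\<^sub>R \<beta> \<and> y = z' + of_nat j *\<^sub>R \<beta>}"
    for z z'
  have "{y. tail_sum \<beta> G y \<noteq> 0} \<subseteq> (\<Union>z\<in>supp G. \<Union>z'\<in>supp G. Y z z')"
  proof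
    fix y assume "y \<in> {y. tail_sum \<beta> G y \<noteq> 0}"
    then obtain z z' k j where "z \<in> supp G" "z' \<in> supp G"
      "y = z - of_nat k *\<^sub>R \<beta>" "y = z' + of_nat j *\<^sub>R \<beta>"
      using tail_sum_support[OF zero] by blast
    then show "y \<in> (\<Union>z\<in>supp G. \<Union>z'\<in>supp G. Y z z')" unfolding Y_def by blast
  qed
  moreover have "finite (\<Union>z\<in>supp G. \<Union>z'\<in>supp G. Y z z')"
    unfolding Y_def by (intro finite_UN_I finite_keys finite_ray_meets_ray[OF \<beta>(1)])
  ultimately have "finite {y. tail_sum \<beta> G y \<noteq> 0}" by (rule finite_subset)
  then have coeff_G': "coeff (Abs_poly_mapping (tail_sum \<beta> G)) = tail_sum \<beta> G" by simp
  have "G = (1 - e (- \<beta>)) * Abs_poly_mapping (tail_sum \<beta> G)"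
  proof (rule poly_mapping_eqI)
    fix y show "coeff G y = coeff ((1 - e (- \<beta>)) * Abs_poly_mapping (tail_sum \<beta> G)) y"
      using tail_sum_step[OF \<beta>(1), of G y] by (simp add: coeff_one_minus_e_mult coeff_G')
  qed
  moreover have "supp (Abs_poly_mapping (tail_sum \<beta> G)) \<subseteq> \<Lambda>"
  proof
    fix y assume "y \<in> supp (Abs_poly_mapping (tail_sum \<beta> G))"
    then have "tail_sum \<beta> G y \<noteq> 0" by (simp add: in_keys_iff coeff_G')
    then obtain z k where "z \<in> supp G" "y = z - of_nat k *\<^sub>R \<beta>"
      using tail_sum_support[OF zero] by blast
    then show "y \<in> \<Lambda>" using G\<Lambda> \<beta>(2) by (auto intro: weight_lattice_diff weight_lattice_of_nat_scaleR)
  qed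
  ultimately show ?thesis by blast
qed

lemma string_sum_denom_prod:
  assumes "T \<subseteq> P" "\<beta> \<in> P" "\<beta> \<notin> T" "\<And>x. string_sum \<beta> (denom_prod T * H) x = 0"
  shows "string_sum \<beta> H x = 0"
proof -
  have "finite T" using assms(1) finite_P finite_subset by blast
  then show ?thesis using assms
  proof (induction T arbitrary: H x rule: finite_induct)
    case empty
    then show ?case by (simp add: denom_prod_def)
  next
    case (insert a T)
    have "denom_prod (insert a T) * H = denom_prod T * ((1 - e (- a)) * H)"
      using insert.hyps by (simp add: denom_prod_def ac_simps)
    then have "string_sum \<beta> ((1 - e (- a)) * H) y = 0" for y
      using insert.IH[of "(1 - e (- a)) * H"] insert.prems by simp
    then show ?case using string_sum_cancel[of a \<beta> H x] insert.prems by auto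
  qed
qed

lemma anti_invariant_dvd_denom_prod:
  assumes F: "anti_invariant F" and F\<Lambda>: "supp F \<subseteq> \<Lambda>" and T: "T \<subseteq> P"
  shows "\<exists>G. F = denom_prod T * G \<and> supp G \<subseteq> \<Lambda>"
proof -
  have "finite T" using T finite_P finite_subset by blast
  then show ?thesis using T
  proof (induction T rule: finite_induct)
    case empty
    then show ?case using F\<Lambda> by (intro exI[of _ F]) (simp add: denom_prod_def)
  next
    case (insert \<beta> T)
    then obtain G where G: "F = denom_prod T * G" "supp G \<subseteq> \<Lambda>" by auto
    have \<beta>: "\<beta> \<in> P" "\<beta> \<in> R" using insert.prems positive_root by auto
    have "string_sum \<beta> G x = 0" for x
      using string_sum_denom_prod[of T \<beta> G x] string_sum_anti_invariant[OF F F\<Lambda> \<beta>(2)] G(1)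
        insert.hyps insert.prems \<beta>(1) by auto
    then obtain G' where "G = (1 - e (- \<beta>)) * G'" "supp G' \<subseteq> \<Lambda>"
      using string_sums_zero_imp_dvd root_nonzero[OF \<beta>(2)] root_in_weight_lattice[OF \<beta>(2)] G(2)
      by blast
    moreover have "denom_prod (insert \<beta> T) = (1 - e (- \<beta>)) * denom_prod T"
      using insert.hyps by (simp add: denom_prod_def)
    ultimately have "F = denom_prod (insert \<beta> T) * G'" unfolding G(1) by (simp only: ac_simps)
    then show ?case using \<open>supp G' \<subseteq> \<Lambda>\<close> by blast
  qed
qed

definition weyl_denominator :: "'a group_ring" where
  "weyl_denominator = e \<rho> * denom_prod P"

lemma weyl_denominator_prod: "weyl_denominator = (\<Prod>\<alpha>\<in>P. denom_factor \<alpha>)"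
proof -
  have "(\<Prod>\<alpha>\<in>P. denom_factor \<alpha>) = (\<Prod>\<alpha>\<in>P. e ((1/2) *\<^sub>R \<alpha>)) * denom_prod P"
    unfolding denom_factor_eq denom_prod_def by (rule prod.distrib)
  also have "(\<Prod>\<alpha>\<in>P. e ((1/2) *\<^sub>R \<alpha>)) = e \<rho>"
    unfolding prod_e[OF finite_P] rho_def by (simp add: scaleR_sum_right)
  finally show ?thesis unfolding weyl_denominator_def by simp
qed

lemma pullback_denom_factor:
  assumes w: "w \<in> W" shows "pullback w (denom_factor \<gamma>) = denom_factor (inv w \<gamma>)"
  unfolding denom_factor_def
  by (simp add: pullback_diff[OF w] pullback_e[OF w] weyl_scaleR[OF weyl_inv_in[OF w]]
      weyl_minus[OF weyl_inv_in[OF w]])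

lemma anti_invariant_weyl_denominator: "anti_invariant weyl_denominator"
  unfolding anti_invariant_def
proof
  fix w assume w: "w \<in> W"
  define u where "u = inv w"
  have u: "u \<in> W" unfolding u_def using weyl_inv_in[OF w] .
  have sign: "denom_factor (u \<alpha>) = (if u \<alpha> \<in> P then 1 else -1) * denom_factor (pos_root (u \<alpha>))" for \<alpha>
    by (simp add: pos_root_def denom_factor_minus)
  have "pullback w weyl_denominator = (\<Prod>\<alpha>\<in>P. denom_factor (u \<alpha>))"
    unfolding weyl_denominator_prod pullback_prod[OF w] pullback_denom_factor[OF w] u_def ..
  also have "\<dots> = (\<Prod>\<alpha>\<in>P. (if u \<alpha> \<in> P then 1 else -1)) * (\<Prod>\<alpha>\<in>P. denom_factor (pos_root (u \<alpha>)))"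
    unfolding sign by (rule prod.distrib)
  also have "(\<Prod>\<alpha>\<in>P. denom_factor (pos_root (u \<alpha>))) = weyl_denominator"
    unfolding weyl_denominator_prod
    using prod.reindex_bij_betw[OF bij_betw_pos_root_weyl[OF u], of denom_factor] by simp
  also have "(\<Prod>\<alpha>\<in>P. (if u \<alpha> \<in> P then 1 else -1 :: 'a group_ring))
      = of_int (\<Prod>\<alpha>\<in>P. (if u \<alpha> \<in> P then 1 else -1))"
    unfolding of_int_prod by (rule prod.cong) auto
  also have "(\<Prod>\<alpha>\<in>P. (if u \<alpha> \<in> P then 1 else -1 :: int)) = wsign P w"
    using wsign_prod[of u] wsign_inv[OF w] unfolding u_def by simp
  finally show "pullback w weyl_denominator = of_int (wsign P w) * weyl_denominator" .
qed

lemma coeff_weyl_denominator: "coeff weyl_denominator x = coeff (denom_prod P) (x - \<rho>)"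
  unfolding weyl_denominator_def by (rule coeff_e_mult)

lemma supp_weyl_denominator_strictly_dominant:
  assumes x: "x \<in> supp weyl_denominator" "strictly_dominant x" shows "x = \<rho>"
proof -
  \<comment> \<open>\<open>x - \<rho>\<close> is minus a sum of positive roots, yet dominant, hence zero.\<close>
  have "x - \<rho> \<in> supp (denom_prod P)" using x(1) by (simp add: in_keys_iff coeff_weyl_denominator)
  then obtain S where S: "S \<subseteq> P" "x - \<rho> = - (\<Sum>a\<in>S. a)"
    using supp_denom_prod[OF finite_P] by blast
  have "(\<Sum>a\<in>S. a) \<in> \<Lambda>"
    using S(1) by (intro weight_lattice_sum root_in_weight_lattice) (auto intro: positive_root)
  moreover have "x = \<rho> - (\<Sum>a\<in>S. a)" using S(2) by (simp add: algebra_simps)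
  ultimately have "x \<in> \<Lambda>" using weight_lattice_diff[OF rho_in_weight_lattice] by simp
  then have "x - \<rho> \<in> dominant R P" using strictly_dominant_minus_rho x(2) by blast
  then have "(\<Sum>a\<in>S. (x - \<rho>) \<bullet> a) \<ge> 0"
    using S(1) unfolding dominant_def by (intro sum_nonneg) auto
  moreover have "(x - \<rho>) \<bullet> (x - \<rho>) = - (\<Sum>a\<in>S. (x - \<rho>) \<bullet> a)"
    by (subst (2) S(2)) (simp add: inner_sum_right)
  ultimately have "(x - \<rho>) \<bullet> (x - \<rho>) \<le> 0" by linarith
  then show ?thesis by (metis antisym inner_ge_zero inner_eq_zero_iff right_minus_eq)
qed

lemma weyl_denominator_eq_Alt_rho: "weyl_denominator = Alt \<rho>"
proof -
  have pos: "\<forall>\<alpha>\<in>P. \<alpha> \<bullet> v > 0" using positive_inner_v by blast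
  have top: "coeff weyl_denominator \<rho> = 1"
    using coeff_denom_prod_0[OF finite_P pos] by (simp add: coeff_weyl_denominator)
  then have "{x\<in>supp weyl_denominator. strictly_dominant x} = {\<rho>}"
    using supp_weyl_denominator_strictly_dominant rho_strictly_dominant by (auto simp: in_keys_iff)
  then show ?thesis
    using anti_invariant_decomp[OF anti_invariant_weyl_denominator] top by simp
qed

lemma supp_Alt_weight_lattice:
  assumes "x \<in> \<Lambda>" shows "supp (Alt x) \<subseteq> \<Lambda>"
proof
  fix y assume "y \<in> supp (Alt x)"
  then have "alternant R P x y \<noteq> 0" by (simp add: in_keys_iff coeff_Alt)
  then obtain w where "w \<in> W" "w x = y" using alternant_nonzero_orbit by blast
  then show "y \<in> \<Lambda>" using weyl_weight_lattice assms by blast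
qed

lemma weyl_character_exists:
  assumes "\<mu> \<in> dominant R P"
  shows "\<exists>G. Alt \<rho> * G = Alt (\<mu> + \<rho>) \<and> supp G \<subseteq> \<Lambda>"
proof -
  obtain G where G: "Alt (\<mu> + \<rho>) = denom_prod P * G" "supp G \<subseteq> \<Lambda>"
    using anti_invariant_dvd_denom_prod[OF anti_invariant_Alt
        supp_Alt_weight_lattice[OF dominant_plus_rho(1)[OF assms]]] by blast
  have "Alt \<rho> * (e (- \<rho>) * G) = (e \<rho> * e (- \<rho>)) * (denom_prod P * G)"
    unfolding weyl_denominator_eq_Alt_rho[symmetric] weyl_denominator_def by (simp only: ac_simps)
  also have "\<dots> = Alt (\<mu> + \<rho>)" using G(1) by (simp add: e_mult)
  finally have "Alt \<rho> * (e (- \<rho>) * G) = Alt (\<mu> + \<rho>)" .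
  moreover have "supp (e (- \<rho>) * G) \<subseteq> \<Lambda>"
  proof
    fix y assume "y \<in> supp (e (- \<rho>) * G)"
    then obtain a b where "a \<in> supp (e (- \<rho>))" "b \<in> supp G" "y = a + b" using supp_mult by blast
    then have "b \<in> supp G" "y = - \<rho> + b" by simp_all
    then show "y \<in> \<Lambda>"
      using G(2) weight_lattice_add weight_lattice_minus[OF rho_in_weight_lattice] by blast
  qed
  ultimately show ?thesis by blast
qed

section \<open>Characters and plethysm\<close>

definition character :: "'a \<Rightarrow> 'a group_ring" where
  "character \<mu> = (THE G. Alt \<rho> * G = Alt (\<mu> + \<rho>))"

lemma character:
  assumes "\<mu> \<in> dominant R P"
  shows "Alt \<rho> * character \<mu> = Alt (\<mu> + \<rho>)" "supp (character \<mu>) \<subseteq> \<Lambda>"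
proof -
  obtain G where G: "Alt \<rho> * G = Alt (\<mu> + \<rho>)" "supp G \<subseteq> \<Lambda>"
    using weyl_character_exists[OF assms] by blast
  have "character \<mu> = G" unfolding character_def
    by (rule the_equality) (use G Alt_rho_cancel in auto)
  then show "Alt \<rho> * character \<mu> = Alt (\<mu> + \<rho>)" "supp (character \<mu>) \<subseteq> \<Lambda>" using G by auto
qed

lemma ch_eq_coeff_character:
  assumes "\<mu> \<in> dominant R P" shows "ch R P \<mu> = coeff (character \<mu>)"
  unfolding ch_def
proof (rule the_equality)
  show "finite (fsupp (coeff (character \<mu>)))
      \<and> conv (coeff (character \<mu>)) (alternant R P \<rho>) = alternant R P (\<mu> + \<rho>)"
    using character(1)[OF assms] by (simp add: fsupp_coeff alternant_eq_coeff_Alt conv_coeff mult.commute)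
next
  fix f assume f: "finite (fsupp f) \<and> conv f (alternant R P \<rho>) = alternant R P (\<mu> + \<rho>)"
  then have f_eq: "coeff (Abs_poly_mapping f) = f" using coeff_Abs_poly_mapping by blast
  then have "coeff (Abs_poly_mapping f * Alt \<rho>) = coeff (Alt (\<mu> + \<rho>))"
    using f by (simp add: alternant_eq_coeff_Alt conv_coeff[symmetric])
  then have "Alt \<rho> * Abs_poly_mapping f = Alt \<rho> * character \<mu>"
    using character(1)[OF assms] by (simp add: mult.commute)
  then show "f = coeff (character \<mu>)" using Alt_rho_cancel f_eq by metis
qed

lemma weights_eq_supp_character: "\<mu> \<in> dominant R P \<Longrightarrow> weights R P \<mu> = supp (character \<mu>)"
  unfolding weights_def by (simp add: ch_eq_coeff_character fsupp_coeff)

lemma invariant_character: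
  assumes \<mu>: "\<mu> \<in> dominant R P" shows "invariant (character \<mu>)"
  unfolding invariant_def
proof
  fix w assume w: "w \<in> W"
  let ?s = "of_int (wsign P w) :: 'a group_ring"
  have "?s * (Alt \<rho> * pullback w (character \<mu>)) = pullback w (Alt \<rho>) * pullback w (character \<mu>)"
    using anti_invariant_Alt w unfolding anti_invariant_def by (simp add: ac_simps)
  also have "\<dots> = ?s * (Alt \<rho> * character \<mu>)"
    using anti_invariant_Alt w character(1)[OF \<mu>]
    unfolding pullback_mult[OF w, symmetric] anti_invariant_def by simp
  finally have "?s * ?s * (Alt \<rho> * pullback w (character \<mu>)) = ?s * ?s * (Alt \<rho> * character \<mu>)"
    by (simp add: mult.assoc)
  moreover have "?s * ?s = 1" using wsign_cases[of w] by (auto simp flip: of_int_mult)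
  ultimately show "pullback w (character \<mu>) = character \<mu>" using Alt_rho_cancel by simp
qed

lemma invariant_adams_op:
  assumes a: "a > 0" and F: "invariant F" shows "invariant (adams_op a F)"
  unfolding invariant_def
proof
  fix w assume w: "w \<in> W"
  show "pullback w (adams_op a F) = adams_op a F"
  proof (rule poly_mapping_eqI)
    fix x
    have "coeff (pullback w (adams_op a F)) x = coeff (pullback w F) ((1 / real a) *\<^sub>R x)"
      by (simp add: coeff_pullback[OF w] coeff_adams_op[OF a] weyl_scaleR[OF w])
    then show "coeff (pullback w (adams_op a F)) x = coeff (adams_op a F) x"
      using F w unfolding invariant_def by (simp add: coeff_adams_op[OF a])
  qed
qed

lemma supp_adams_op_weight_lattice:
  assumes a: "a > 0" and F: "supp F \<subseteq> \<Lambda>" shows "supp (adams_op a F) \<subseteq> \<Lambda>"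
proof
  fix \<nu> assume "\<nu> \<in> supp (adams_op a F)"
  then have "(1 / real a) *\<^sub>R \<nu> \<in> supp F" by (simp add: in_keys_iff coeff_adams_op[OF a])
  then have "of_nat a *\<^sub>R ((1 / real a) *\<^sub>R \<nu>) \<in> \<Lambda>" using F weight_lattice_of_nat_scaleR by blast
  then show "\<nu> \<in> \<Lambda>" using a by simp
qed

lemma coeff_sum_Alt_dominant:
  assumes "finite M" "M \<subseteq> dominant R P" "\<nu> \<in> dominant R P"
  shows "coeff (\<Sum>\<mu>\<in>M. of_int (m \<mu>) * Alt (\<mu> + \<rho>)) (\<nu> + \<rho>) = (if \<nu> \<in> M then m \<nu> else 0)"
proof -
  have "coeff (\<Sum>\<mu>\<in>M. of_int (m \<mu>) * Alt (\<mu> + \<rho>)) (\<nu> + \<rho>)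
      = (\<Sum>\<mu>\<in>M. m \<mu> * alternant R P (\<mu> + \<rho>) (id (\<nu> + \<rho>)))"
    by (simp add: lookup_sum coeff_of_int_mult coeff_Alt)
  also have "\<dots> = (\<Sum>\<mu>\<in>M. if \<mu> = \<nu> then m \<mu> else 0)"
    using assms(2,3) alternant_strictly_dominant[OF dominant_plus_rho(2) dominant_plus_rho(2)
        weyl_group.id_in, of _ \<nu>] wsign_id
    by (intro sum.cong) auto
  finally show ?thesis using assms(1) by simp
qed

definition adams_numerator :: "'a \<Rightarrow> nat \<Rightarrow> 'a group_ring" where
  "adams_numerator lam a = adams_op a (character lam) * Alt \<rho>"

definition pleth_coeff :: "'a \<Rightarrow> nat \<Rightarrow> 'a \<Rightarrow> int" where
  "pleth_coeff lam a \<mu> = (if \<mu> \<in> dominant R P then coeff (adams_numerator lam a) (\<mu> + \<rho>) else 0)"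

lemma anti_invariant_adams_numerator:
  "lam \<in> dominant R P \<Longrightarrow> a > 0 \<Longrightarrow> anti_invariant (adams_numerator lam a)"
  unfolding adams_numerator_def
  by (rule invariant_mult_anti_invariant[OF invariant_adams_op[OF _ invariant_character]
        anti_invariant_Alt])

lemma supp_adams_numerator:
  assumes lam: "lam \<in> dominant R P" and a: "a > 0" shows "supp (adams_numerator lam a) \<subseteq> \<Lambda>"
proof
  fix y assume "y \<in> supp (adams_numerator lam a)"
  then obtain p q where "p \<in> supp (adams_op a (character lam))" "q \<in> supp (Alt \<rho>)" "y = p + q"
    unfolding adams_numerator_def using supp_mult by blast
  then show "y \<in> \<Lambda>"
    using supp_adams_op_weight_lattice[OF a character(2)[OF lam]]
      supp_Alt_weight_lattice[OF rho_in_weight_lattice] weight_lattice_add by blast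
qed

lemma adams_numerator_decomp:
  assumes lam: "lam \<in> dominant R P" and a: "a > 0"
  shows "finite (fsupp (pleth_coeff lam a))" "fsupp (pleth_coeff lam a) \<subseteq> dominant R P"
    and "adams_numerator lam a
      = (\<Sum>\<mu>\<in>fsupp (pleth_coeff lam a). of_int (pleth_coeff lam a \<mu>) * Alt (\<mu> + \<rho>))"
proof -
  let ?N = "adams_numerator lam a"
  let ?K = "{x\<in>supp ?N. strictly_dominant x}"
  have K_dom: "x - \<rho> \<in> dominant R P" if "x \<in> ?K" for x
    using that supp_adams_numerator[OF lam a] strictly_dominant_minus_rho by blast
  have supp_eq: "fsupp (pleth_coeff lam a) = (\<lambda>x. x - \<rho>) ` ?K"
  proof (intro set_eqI iffI)
    fix \<mu> assume "\<mu> \<in> fsupp (pleth_coeff lam a)"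
    then have \<mu>: "\<mu> \<in> dominant R P" "coeff ?N (\<mu> + \<rho>) \<noteq> 0"
      unfolding fsupp_def pleth_coeff_def by (auto split: if_splits)
    then have "\<mu> + \<rho> \<in> ?K" using dominant_plus_rho(2)[OF \<mu>(1)] by (simp add: in_keys_iff)
    then show "\<mu> \<in> (\<lambda>x. x - \<rho>) ` ?K" by (rule rev_image_eqI) simp
  next
    fix \<mu> assume "\<mu> \<in> (\<lambda>x. x - \<rho>) ` ?K"
    then obtain x where "x \<in> ?K" "\<mu> = x - \<rho>" by blast
    then show "\<mu> \<in> fsupp (pleth_coeff lam a)"
      using K_dom by (simp add: fsupp_def pleth_coeff_def in_keys_iff)
  qed
  then show "finite (fsupp (pleth_coeff lam a))" "fsupp (pleth_coeff lam a) \<subseteq> dominant R P"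
    using K_dom by auto
  have "?N = (\<Sum>x\<in>?K. of_int (coeff ?N x) * Alt x)"
    by (rule anti_invariant_decomp[OF anti_invariant_adams_numerator[OF lam a]])
  also have "\<dots> = (\<Sum>x\<in>?K. of_int (pleth_coeff lam a (x - \<rho>)) * Alt (x - \<rho> + \<rho>))"
    using K_dom by (intro sum.cong) (simp_all add: pleth_coeff_def)
  also have "\<dots> = (\<Sum>\<mu>\<in>fsupp (pleth_coeff lam a). of_int (pleth_coeff lam a \<mu>) * Alt (\<mu> + \<rho>))"
    unfolding supp_eq by (rule sum.reindex[symmetric, unfolded comp_def]) (rule inj_onI, simp)
  finally show "?N = \<dots>" .
qed

lemma adams_ch_decomp_iff:
  assumes lam: "lam \<in> dominant R P" and a: "a > 0"
    and m: "finite (fsupp m)" "fsupp m \<subseteq> dominant R P"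
  shows "adams a (ch R P lam) = (\<lambda>\<nu>. \<Sum>\<mu>\<in>fsupp m. m \<mu> * ch R P \<mu> \<nu>)
    \<longleftrightarrow> adams_numerator lam a = (\<Sum>\<mu>\<in>fsupp m. of_int (m \<mu>) * Alt (\<mu> + \<rho>))"
proof -
  let ?M = "\<Sum>\<mu>\<in>fsupp m. of_int (m \<mu>) * character \<mu>"
  have "(\<lambda>\<nu>. \<Sum>\<mu>\<in>fsupp m. m \<mu> * ch R P \<mu> \<nu>) = coeff ?M"
  proof (rule ext)
    fix \<nu>
    have "coeff ?M \<nu> = (\<Sum>\<mu>\<in>fsupp m. m \<mu> * coeff (character \<mu>) \<nu>)"
      by (simp add: lookup_sum coeff_of_int_mult)
    also have "\<dots> = (\<Sum>\<mu>\<in>fsupp m. m \<mu> * ch R P \<mu> \<nu>)"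
      by (rule sum.cong) (use m(2) ch_eq_coeff_character in auto)
    finally show "(\<Sum>\<mu>\<in>fsupp m. m \<mu> * ch R P \<mu> \<nu>) = coeff ?M \<nu>" by simp
  qed
  moreover have "adams a (ch R P lam) = coeff (adams_op a (character lam))"
    by (simp add: ch_eq_coeff_character[OF lam] adams_eq_coeff_adams_op[OF a])
  ultimately have "adams a (ch R P lam) = (\<lambda>\<nu>. \<Sum>\<mu>\<in>fsupp m. m \<mu> * ch R P \<mu> \<nu>)
      \<longleftrightarrow> adams_op a (character lam) = ?M"
    by (simp add: Poly_Mapping.lookup_inject)
  also have "\<dots> \<longleftrightarrow> Alt \<rho> * adams_op a (character lam) = Alt \<rho> * ?M"
    by (rule iffI) (simp, erule Alt_rho_cancel)
  also have "Alt \<rho> * ?M = (\<Sum>\<mu>\<in>fsupp m. of_int (m \<mu>) * (Alt \<rho> * character \<mu>))"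
    by (simp add: sum_distrib_left ac_simps)
  also have "\<dots> = (\<Sum>\<mu>\<in>fsupp m. of_int (m \<mu>) * Alt (\<mu> + \<rho>))"
    by (rule sum.cong) (use m(2) character(1) in auto)
  finally show ?thesis unfolding adams_numerator_def by (simp add: mult.commute)
qed

lemma pleth_mult_eq_pleth_coeff:
  assumes lam: "lam \<in> dominant R P" and a: "a > 0"
  shows "pleth_mult R P lam a = pleth_coeff lam a"
  unfolding pleth_mult_def
proof (rule the_equality)
  show "finite (fsupp (pleth_coeff lam a)) \<and> fsupp (pleth_coeff lam a) \<subseteq> dominant R P
      \<and> adams a (ch R P lam) = (\<lambda>\<nu>. \<Sum>\<mu>\<in>fsupp (pleth_coeff lam a). pleth_coeff lam a \<mu> * ch R P \<mu> \<nu>)"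
    using adams_ch_decomp_iff[OF lam a adams_numerator_decomp(1,2)[OF lam a]]
      adams_numerator_decomp[OF lam a] by blast
next
  fix m assume m: "finite (fsupp m) \<and> fsupp m \<subseteq> dominant R P
      \<and> adams a (ch R P lam) = (\<lambda>\<nu>. \<Sum>\<mu>\<in>fsupp m. m \<mu> * ch R P \<mu> \<nu>)"
  then have fin: "finite (fsupp m)" and dom: "fsupp m \<subseteq> dominant R P"
    and eq: "adams a (ch R P lam) = (\<lambda>\<nu>. \<Sum>\<mu>\<in>fsupp m. m \<mu> * ch R P \<mu> \<nu>)" by blast+
  have N: "adams_numerator lam a = (\<Sum>\<mu>\<in>fsupp m. of_int (m \<mu>) * Alt (\<mu> + \<rho>))"
    using adams_ch_decomp_iff[OF lam a fin dom] eq by blast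
  show "m = pleth_coeff lam a"
  proof
    fix \<nu>
    show "m \<nu> = pleth_coeff lam a \<nu>"
    proof (cases "\<nu> \<in> dominant R P")
      case True
      then show ?thesis using coeff_sum_Alt_dominant[OF fin dom True, of m]
        unfolding pleth_coeff_def N by (simp add: fsupp_def)
    next
      case False
      then show ?thesis using dom unfolding pleth_coeff_def fsupp_def by auto
    qed
  qed
qed

lemma zero_in_S_set:
  assumes lam: "lam \<in> dominant R P" and a: "a > 0" and nz: "pleth_mult R P lam a 0 \<noteq> 0"
  shows "0 \<in> S_set R P lam a"
proof -
  have d0: "0 \<in> dominant R P" unfolding dominant_def using zero_in_weight_lattice by simp
  let ?F = "adams_op a (character lam)"
  have "coeff (?F * Alt \<rho>) \<rho> \<noteq> 0"
    using nz d0 unfolding pleth_mult_eq_pleth_coeff[OF lam a] pleth_coeff_def adams_numerator_def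
    by simp
  then obtain l where l: "l \<in> supp ?F" "coeff ?F l * coeff (Alt \<rho>) (\<rho> - l) \<noteq> 0"
    unfolding coeff_mult by (rule sum.not_neutral_contains_not_neutral)
  then have "alternant R P \<rho> (\<rho> - l) \<noteq> 0" by (simp add: coeff_Alt)
  then obtain \<sigma> where \<sigma>: "\<sigma> \<in> W" "\<sigma> \<rho> = \<rho> - l" using alternant_nonzero_orbit by blast
  have "(1 / real a) *\<^sub>R l \<in> weights R P lam"
    using l(1) unfolding weights_eq_supp_character[OF lam] by (simp add: in_keys_iff coeff_adams_op[OF a])
  moreover have "\<sigma> \<rho> - \<rho> + real a *\<^sub>R ((1 / real a) *\<^sub>R l) = 0" using \<sigma>(2) a by simp
  ultimately have "0 \<in> (\<lambda>\<pi>. \<sigma> \<rho> - \<rho> + real a *\<^sub>R \<pi>) ` weights R P lam"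
    by (rule rev_image_eqI[OF _ sym])
  then show ?thesis unfolding S_set_def using \<sigma>(1) d0 by blast
qed

end

lemma fstar_zero_less:
  fixes P :: "'a::euclidean_space set" and a b :: nat
  assumes "0 < a" "a < b" and \<mu>: "\<forall>\<alpha>\<in>P. \<mu> \<bullet> \<alpha> \<ge> 0" and nz: "\<mu> \<noteq> 0"
  shows "fstar P a b lam 0 < fstar P a b lam \<mu>"
proof -
  have "\<mu> \<bullet> rho P \<ge> 0" unfolding rho_def using \<mu> by (simp add: inner_sum_right sum_nonneg)
  moreover have "real b / real a - 1 > 0" using assms by (simp add: field_simps)
  moreover have "real b / (2 * real a) * (\<mu> \<bullet> \<mu>) > 0" using assms by simp
  ultimately show ?thesis unfolding fstar_def by (simp add: add_pos_nonneg)
qed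

theorem mainTheorem14:
  fixes R P :: "'a::euclidean_space set" and a b :: nat and lam :: 'a
  assumes "root_system R" and "irreducible_rs R" and "normalized_rs R"
    and "positive_system R P"
    and "coprime a b" and "0 < a" and "a < b"
    and "lam \<in> dominant R P"
    and "pleth_mult R P lam a 0 \<noteq> 0"
  shows "0 \<in> S_set R P lam a
    \<and> (\<forall>\<mu>\<in>S_set R P lam a. \<mu> \<noteq> 0 \<longrightarrow> fstar P a b lam 0 < fstar P a b lam \<mu>)"
proof
  obtain v where "\<forall>\<alpha>\<in>R. \<alpha> \<bullet> v \<noteq> 0" "P = {\<alpha>\<in>R. \<alpha> \<bullet> v > 0}"
    using assms(4) unfolding positive_system_def by blast
  then interpret positive_root_system R P v
    using assms(1) by unfold_locales auto
  show "0 \<in> S_set R P lam a" using zero_in_S_set assms(6,8,9) by blast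
  show "\<forall>\<mu>\<in>S_set R P lam a. \<mu> \<noteq> 0 \<longrightarrow> fstar P a b lam 0 < fstar P a b lam \<mu>"
  proof (intro ballI impI)
    fix \<mu> assume "\<mu> \<in> S_set R P lam a" "\<mu> \<noteq> 0"
    then show "fstar P a b lam 0 < fstar P a b lam \<mu>"
      using fstar_zero_less[OF assms(6,7)] unfolding S_set_def dominant_def by blast
  qed
qed

end
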